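(* Let $\{p_k\}_{k\ge0}$ be an offspring distribution with $p_0>0$, mean $\mu>1$, probability generating function $f$ and extinction probability $q$, and let $\beta\in(\mu^{-1},f'(q)^{-1/2})$. Let $h(s):=f(qs)/q$, let $\mathcal{T}^h$ be a Galton–Watson tree with offspring generating function $h$ and root $\rho$, and let $\overline{\mathcal{T}}^h$ be the tree obtained by attaching an extra vertex $\overline{\rho}$ as the parent of $\rho$ (with $\overline{\rho}$ as the new root). Then \[\mathbf{E}\Big[E^{\overline{\mathcal{T}}^h}_{\overline{\rho}}\big[(\tau^+_{\overline{\rho}})^2\big]\Big]<\infty,\] where $\tau^+_{\overline{\rho}}:=\inf\{k>0: X_k=\overline{\rho}\}$ and $\mathbf{E}$ is expectation over the law of $\mathcal{T}^h$.
   Context: For a fixed rooted tree with root $r$, the $\beta$-biased random walk $(X_n)$ started at $z$, with law $P_z$ (and expectation $E_z$), is the Markov chain which from a vertex $x\neq r$ moves to its parent with probability $1/(1+\beta|c(x)|)$ and to each child with probability $\beta/(1+\beta|c(x)|)$ (here $c(x)$ is the set of children of $x$), and from the root $r$ moves to each child with probability $1/|c(r)|$. Here the root is $\overline{\rho}$, which has the single child $\rho$. *)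

theory Defs
  imports "HOL-Probability.Probability"
begin

definition pgf :: "nat pmf \<Rightarrow> real \<Rightarrow> real" where
  "pgf P s = (\<Sum>k. pmf P k * s ^ k)"

text \<open>Mean of the offspring distribution (assumed finite where used).\<close>
definition offspring_mean :: "nat pmf \<Rightarrow> real" where
  "offspring_mean P = (\<Sum>k. real k * pmf P k)"

text \<open>A Galton--Watson tree is encoded by an i.i.d. family N of offspring numbers indexed
  by Ulam--Harris labels (nat lists).  The root rho is the empty list; the children of a
  vertex u are u @ [i] for i < N u.\<close>

definition gw_measure :: "nat pmf \<Rightarrow> (nat list \<Rightarrow> nat) measure" where
  "gw_measure P = PiM UNIV (\<lambda>_. measure_pmf P)"

definition gw_tree :: "(nat list \<Rightarrow> nat) \<Rightarrow> nat list set" where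
  "gw_tree N = {u. \<forall>j < length u. u ! j < N (take j u)}"

definition extinction_prob :: "nat pmf \<Rightarrow> real" where
  "extinction_prob P = measure (gw_measure P) {N. finite (gw_tree N)}"

text \<open>The vertex set of the augmented tree is {rho-bar} together with the vertices of
  gw_tree N; rho-bar is the new root with single child rho = []; the parent of [] is rho-bar
  and the parent of a nonempty u is butlast u.
  first_hit beta N n u is the probability, under P_u for the beta-biased walk, that
  the walk started at the tree vertex u hits rho-bar for the first time at time n.\<close>

fun first_hit :: "real \<Rightarrow> (nat list \<Rightarrow> nat) \<Rightarrow> nat \<Rightarrow> nat list \<Rightarrow> real" where
  "first_hit \<beta> N 0 u = 0"
| "first_hit \<beta> N (Suc n) u =
     (1 / (1 + \<beta> * real (N u))) *
       (if u = [] then (if n = 0 then 1 else 0) else first_hit \<beta> N n (butlast u))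
     + (\<Sum>i<N u. (\<beta> / (1 + \<beta> * real (N u))) * first_hit \<beta> N n (u @ [i]))"

text \<open>Since from rho-bar the walk moves to rho with probability 1,
  P_{rho-bar}(tau^+ = m + 1) = first_hit beta N m [].  The second moment of tau^+ under
  P_{rho-bar}, as an extended nonnegative real (infinite if tau^+ = infinity with positive
  probability).\<close>

definition return_time_second_moment :: "real \<Rightarrow> (nat list \<Rightarrow> nat) \<Rightarrow> ennreal" where
  "return_time_second_moment \<beta> N =
     (\<Sum>m. ennreal ((real m + 1) ^ 2 * first_hit \<beta> N m []))
     + (if (\<Sum>m. ennreal (first_hit \<beta> N m [])) < 1 then \<top> else 0)"

end

theory Submission
  imports Defs
begin

text \<open>From the extra root the walk steps to \<open>\<rho>\<close>, so \<open>\<tau>\<^sup>+\<close> is one more than the hitting time \<open>\<tau>\<close>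
  of the extra root from \<open>\<rho>\<close>. Let \<open>y(u)\<close> be the \<open>\<beta>\<close>-discounted number of descendants of \<open>u\<close>, so
  \<open>y(u) = 1 + \<beta> \<Sum>\<^sub>i y(ui)\<close>, and let \<open>k(u) = 4 (y(u) - 1)\<^sup>2 + 4 \<beta> \<Sum>\<^sub>i y(ui)\<^sup>2 + \<beta> \<Sum>\<^sub>i k(ui)\<close>.
  Summing \<open>2 y - 1\<close> and \<open>k\<close> over the ancestors of \<open>u\<close> gives \<open>A(u)\<close> and \<open>B(u)\<close> such that \<open>A\<close> and
  \<open>A\<^sup>2 + B\<close> satisfy exactly the one-step equations of \<open>E\<^sub>u \<tau>\<close> and \<open>E\<^sub>u \<tau>\<^sup>2\<close>; induction on a time
  horizon shows that they dominate the truncated moments. Hence the walk returns almost surely and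
  \<open>E[(\<tau>\<^sup>+)\<^sup>2] \<le> 4 y(\<rho>)\<^sup>2 + k(\<rho>)\<close>.

  Averaged over the tree, \<open>y\<close> and \<open>k\<close> are sums over generations whose expectations are geometric
  series in \<open>\<beta> m\<close> and \<open>\<beta>\<^sup>2 m\<close>, where \<open>m = h'(1) = f'(q)\<close> is the mean of the offspring law
  conditioned on extinction. Convexity of \<open>f\<close> gives \<open>m \<le> 1\<close>, and \<open>\<beta> < f'(q)\<^sup>-\<^sup>1\<^sup>/\<^sup>2\<close> gives
  \<open>\<beta>\<^sup>2 m < 1\<close>, hence also \<open>\<beta> m < 1\<close>.\<close>

section \<open>The Galton--Watson measure\<close>

definition child_tree :: "nat \<Rightarrow> (nat list \<Rightarrow> nat) \<Rightarrow> nat list \<Rightarrow> nat" where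
  "child_tree i N = (\<lambda>v. N (i # v))"

lemma gw_tree_Nil: "[] \<in> gw_tree N"
  unfolding gw_tree_def by simp

lemma gw_tree_snoc: "u @ [i] \<in> gw_tree N \<longleftrightarrow> u \<in> gw_tree N \<and> i < N u"
  unfolding gw_tree_def by (auto simp: nth_append less_Suc_eq)

lemma gw_tree_butlast: "u \<in> gw_tree N \<Longrightarrow> u \<noteq> [] \<Longrightarrow> butlast u \<in> gw_tree N"
  using gw_tree_snoc[of "butlast u" "last u" N] by simp

lemma gw_tree_take: "u \<in> gw_tree N \<Longrightarrow> take n u \<in> gw_tree N"
  unfolding gw_tree_def by auto

lemma gw_tree_Cons: "i # v \<in> gw_tree N \<longleftrightarrow> i < N [] \<and> v \<in> gw_tree (child_tree i N)"
  unfolding gw_tree_def child_tree_def by (simp add: All_less_Suc2)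

lemma space_gw_measure [simp]: "space (gw_measure R) = UNIV"
  unfolding gw_measure_def by (simp add: space_PiM PiE_UNIV_domain)

lemma prob_space_gw_measure: "prob_space (gw_measure R)"
  unfolding gw_measure_def by (intro prob_space_PiM) (simp add: measure_pmf.prob_space_axioms)

lemma emeasure_gw_measure_UNIV: "emeasure (gw_measure R) UNIV = 1"
  using prob_space.emeasure_space_1[OF prob_space_gw_measure, of R] by simp

lemma measurable_component_count_space:
  "x \<in> I \<Longrightarrow> (\<lambda>\<omega>. \<omega> x) \<in> PiM I (\<lambda>_. measure_pmf R) \<rightarrow>\<^sub>M count_space UNIV"
  using measurable_component_singleton[of x I "\<lambda>_. measure_pmf R"]
  by (subst measurable_cong_sets[OF refl sets_measure_pmf_count_space[symmetric]])

lemma measurable_gw_component: "(\<lambda>N. N u) \<in> gw_measure R \<rightarrow>\<^sub>M measure_pmf R"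
  unfolding gw_measure_def by (rule measurable_component_singleton) simp

lemma measurable_gw_component_count_space [measurable]:
  "(\<lambda>N. N u) \<in> gw_measure R \<rightarrow>\<^sub>M count_space UNIV"
  unfolding gw_measure_def by (rule measurable_component_count_space) simp

lemma measurable_child_tree [measurable]: "child_tree i \<in> gw_measure R \<rightarrow>\<^sub>M gw_measure R"
proof -
  have "(\<lambda>N v. N (i # v)) \<in> gw_measure R \<rightarrow>\<^sub>M gw_measure R"
    unfolding gw_measure_def
    by (rule measurable_PiM_single')
       (auto intro: measurable_component_count_space simp: space_PiM PiE_UNIV_domain)
  then show ?thesis unfolding child_tree_def[abs_def] .
qed

lemma distr_child_tree: "distr (gw_measure R) (gw_measure R) (child_tree i) = gw_measure R"
proof -
  have "distr (PiM UNIV (\<lambda>_. measure_pmf R)) (PiM UNIV (\<lambda>_. measure_pmf R))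
      (\<lambda>\<omega>. \<lambda>v\<in>UNIV. \<omega> (i # v)) = PiM UNIV (\<lambda>_. measure_pmf R)"
    by (rule distr_PiM_reindex) (auto simp: measure_pmf.prob_space_axioms)
  then show ?thesis unfolding gw_measure_def child_tree_def[abs_def] by (simp add: restrict_UNIV)
qed

lemma distr_gw_component: "distr (gw_measure R) (measure_pmf R) (\<lambda>N. N u) = measure_pmf R"
  unfolding gw_measure_def
  by (rule distr_PiM_component) (auto simp: measure_pmf.prob_space_axioms)

lemma nn_integral_child_tree:
  "G \<in> borel_measurable (gw_measure R) \<Longrightarrow>
    (\<integral>\<^sup>+N. G (child_tree i N) \<partial>gw_measure R) = (\<integral>\<^sup>+N. G N \<partial>gw_measure R)"
  by (subst (2) distr_child_tree[symmetric, of _ i]) (simp add: nn_integral_distr)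

lemma nn_integral_gw_component:
  "(\<integral>\<^sup>+N. h (N u) \<partial>gw_measure R) = (\<integral>\<^sup>+k. h k \<partial>measure_pmf R)"
proof -
  have "(\<integral>\<^sup>+k. h k \<partial>measure_pmf R) = (\<integral>\<^sup>+k. h k \<partial>distr (gw_measure R) (measure_pmf R) (\<lambda>N. N u))"
    by (simp add: distr_gw_component)
  also have "\<dots> = (\<integral>\<^sup>+N. h (N u) \<partial>gw_measure R)"
    by (subst nn_integral_distr) (auto simp: measurable_gw_component measurable_pmf_measure1)
  finally show ?thesis by simp
qed

text \<open>Index \<open>None\<close> stands for the offspring number of the root, \<open>Some i\<close> for the subtree of
  its \<open>i\<close>-th child.\<close>

lemma indep_vars_root_child_trees:
  fixes h :: "nat \<Rightarrow> ennreal" and G :: "nat \<Rightarrow> (nat list \<Rightarrow> nat) \<Rightarrow> ennreal"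
  assumes G: "\<And>i. G i \<in> borel_measurable (gw_measure R)"
  shows "prob_space.indep_vars (gw_measure R) (\<lambda>_. borel)
     (\<lambda>j N. case j of None \<Rightarrow> h (N []) | Some i \<Rightarrow> G i (child_tree i N)) UNIV"
proof -
  interpret prob_space "gw_measure R" by (rule prob_space_gw_measure)
  have components: "indep_vars (\<lambda>_. measure_pmf R) (\<lambda>u N. N u) UNIV"
    by (subst indep_vars_iff_distr_eq_PiM)
       (auto simp: distr_gw_component restrict_UNIV measurable_gw_component,
        simp add: gw_measure_def distr_id)
  define K where "K = (\<lambda>j::nat option. case j of None \<Rightarrow> {[]::nat list} | Some i \<Rightarrow> range (Cons i))"
  have "disjoint_family_on K UNIV"
    unfolding disjoint_family_on_def K_def by (auto split: option.splits)
  then have blocks: "indep_vars (\<lambda>j. PiM (K j) (\<lambda>_. measure_pmf R))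
      (\<lambda>j \<omega>. restrict (\<lambda>u. \<omega> u) (K j)) UNIV"
    by (intro indep_vars_restrict[OF components]) auto
  define Y where "Y = (\<lambda>j x. case j of None \<Rightarrow> h (x []) | Some i \<Rightarrow> G i (\<lambda>v. x (i # v)))"
  have "Y j \<in> borel_measurable (PiM (K j) (\<lambda>_. measure_pmf R))" for j
  proof (cases j)
    case None
    then show ?thesis unfolding Y_def
      by (auto intro!: measurable_compose[OF measurable_component_count_space] simp: K_def)
  next
    case (Some i)
    have "(\<lambda>x v. x (i # v)) \<in> PiM (K j) (\<lambda>_. measure_pmf R) \<rightarrow>\<^sub>M gw_measure R"
      unfolding gw_measure_def using Some
      by (intro measurable_PiM_single')
         (auto intro!: measurable_component_count_space simp: K_def space_PiM PiE_UNIV_domain)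
    then show ?thesis using Some G unfolding Y_def by (auto intro: measurable_compose)
  qed
  then have "indep_vars (\<lambda>_. borel) (\<lambda>j \<omega>. Y j (restrict (\<lambda>u. \<omega> u) (K j))) UNIV"
    by (rule indep_vars_compose2[OF blocks])
  moreover have "(\<lambda>j \<omega>. Y j (restrict (\<lambda>u. \<omega> u) (K j))) =
      (\<lambda>j N. case j of None \<Rightarrow> h (N []) | Some i \<Rightarrow> G i (child_tree i N))"
    by (auto simp: fun_eq_iff Y_def K_def child_tree_def split: option.splits)
  ultimately show ?thesis by simp
qed

lemma nn_integral_root_child_trees_prod:
  fixes h :: "nat \<Rightarrow> ennreal" and G :: "nat \<Rightarrow> (nat list \<Rightarrow> nat) \<Rightarrow> ennreal"
  assumes G: "\<And>i. G i \<in> borel_measurable (gw_measure R)" and F: "finite F"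
  shows "(\<integral>\<^sup>+N. h (N []) * (\<Prod>i\<in>F. G i (child_tree i N)) \<partial>gw_measure R)
     = (\<integral>\<^sup>+k. h k \<partial>measure_pmf R) * (\<Prod>i\<in>F. \<integral>\<^sup>+N. G i N \<partial>gw_measure R)"
proof -
  interpret prob_space "gw_measure R" by (rule prob_space_gw_measure)
  define X where "X = (\<lambda>j N. case j of None \<Rightarrow> h (N []) | Some i \<Rightarrow> G i (child_tree i N))"
  define I where "I = insert None (Some ` F)"
  have "indep_vars (\<lambda>_. borel) X I"
    unfolding X_def by (rule indep_vars_subset[OF indep_vars_root_child_trees[OF G]]) simp
  then have "(\<integral>\<^sup>+N. (\<Prod>j\<in>I. X j N) \<partial>gw_measure R) = (\<Prod>j\<in>I. \<integral>\<^sup>+N. X j N \<partial>gw_measure R)"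
    using F by (intro indep_vars_nn_integral) (auto simp: I_def)
  moreover have "(\<Prod>j\<in>I. f j) = f None * (\<Prod>i\<in>F. f (Some i))" for f :: "nat option \<Rightarrow> ennreal"
    unfolding I_def using F by (simp add: prod.reindex)
  ultimately show ?thesis
    by (simp add: X_def nn_integral_gw_component nn_integral_child_tree[OF G])
qed

section \<open>Sums over the children of the root\<close>

definition children_sum :: "((nat list \<Rightarrow> nat) \<Rightarrow> ennreal) \<Rightarrow> (nat list \<Rightarrow> nat) \<Rightarrow> ennreal" where
  "children_sum G N = (\<Sum>i<N []. G (child_tree i N))"

lemma children_sum_eq_suminf: "children_sum G N = (\<Sum>i. of_bool (i < N []) * G (child_tree i N))"
  by (subst suminf_finite[of "{..<N []}"]) (auto simp: children_sum_def)

lemma borel_measurable_children_sum [measurable]: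
  assumes [measurable]: "G \<in> borel_measurable (gw_measure R)"
  shows "children_sum G \<in> borel_measurable (gw_measure R)"
  unfolding children_sum_eq_suminf[abs_def] by measurable

definition nn_mean :: "nat pmf \<Rightarrow> ennreal" where
  "nn_mean R = (\<integral>\<^sup>+k. of_nat k \<partial>measure_pmf R)"

definition nn_factorial_moment2 :: "nat pmf \<Rightarrow> ennreal" where
  "nn_factorial_moment2 R = (\<integral>\<^sup>+k. of_nat (k * (k - 1)) \<partial>measure_pmf R)"

lemma suminf_of_bool_less: "(\<Sum>i. of_bool (i < k) :: ennreal) = of_nat k"
  by (subst suminf_finite[of "{..<k}"]) auto

lemma suminf_suminf_of_bool_distinct_less:
  "(\<Sum>i. \<Sum>j. of_bool (j \<noteq> i \<and> i < k \<and> j < k) :: ennreal) = of_nat (k * (k - 1))"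
proof -
  have "(\<Sum>j. of_bool (j \<noteq> i \<and> i < k \<and> j < k) :: ennreal) = of_bool (i < k) * of_nat (k - 1)"
    for i
  proof (cases "i < k")
    case True
    then have "(\<Sum>j. of_bool (j \<noteq> i \<and> i < k \<and> j < k) :: ennreal) = (\<Sum>j\<in>{..<k} - {i}. 1)"
      by (subst suminf_finite[of "{..<k} - {i}"]) (auto intro!: sum.cong)
    then show ?thesis using True by simp
  qed simp
  then show ?thesis
    by (simp add: ennreal_suminf_multc suminf_of_bool_less of_nat_mult)
qed

lemma suminf_nn_integral_of_bool_less: "(\<Sum>i. \<integral>\<^sup>+k. of_bool (i < k) \<partial>measure_pmf R) = nn_mean R"
  unfolding nn_mean_def by (subst nn_integral_suminf[symmetric]) (auto simp: suminf_of_bool_less)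

lemma suminf_suminf_nn_integral_of_bool_distinct_less:
  "(\<Sum>i. \<Sum>j. of_bool (j \<noteq> i) * (\<integral>\<^sup>+k. of_bool (i < k \<and> j < k) \<partial>measure_pmf R))
    = nn_factorial_moment2 R"
proof -
  have "(\<Sum>i. \<Sum>j. of_bool (j \<noteq> i) * (\<integral>\<^sup>+k. of_bool (i < k \<and> j < k) \<partial>measure_pmf R))
      = (\<Sum>i. \<Sum>j. \<integral>\<^sup>+k. of_bool (j \<noteq> i \<and> i < k \<and> j < k) \<partial>measure_pmf R)"
    by (intro suminf_cong) (auto simp: nn_integral_cmult[symmetric] intro!: nn_integral_cong)
  also have "\<dots> = (\<integral>\<^sup>+k. (\<Sum>i. \<Sum>j. of_bool (j \<noteq> i \<and> i < k \<and> j < k)) \<partial>measure_pmf R)"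
    by (simp add: nn_integral_suminf)
  finally show ?thesis
    unfolding nn_factorial_moment2_def suminf_suminf_of_bool_distinct_less .
qed

lemma nn_integral_children_sum:
  assumes [measurable]: "G \<in> borel_measurable (gw_measure R)"
  shows "(\<integral>\<^sup>+N. children_sum G N \<partial>gw_measure R) = nn_mean R * (\<integral>\<^sup>+N. G N \<partial>gw_measure R)"
proof -
  have "(\<integral>\<^sup>+N. children_sum G N \<partial>gw_measure R)
      = (\<Sum>i. \<integral>\<^sup>+N. of_bool (i < N []) * G (child_tree i N) \<partial>gw_measure R)"
    unfolding children_sum_eq_suminf by (rule nn_integral_suminf) measurable
  also have "\<dots> = (\<Sum>i. (\<integral>\<^sup>+k. of_bool (i < k) \<partial>measure_pmf R) * (\<integral>\<^sup>+N. G N \<partial>gw_measure R))"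
    using nn_integral_root_child_trees_prod[of "\<lambda>_. G" R "{i}" "\<lambda>k. of_bool (i < k)" for i]
    by simp
  finally show ?thesis
    by (simp add: ennreal_suminf_multc suminf_nn_integral_of_bool_less)
qed

lemma nn_integral_children_pair:
  assumes [measurable]: "G \<in> borel_measurable (gw_measure R)"
  shows "(\<integral>\<^sup>+N. (of_bool (i < N []) * G (child_tree i N)) * (of_bool (j < N []) * G (child_tree j N))
      \<partial>gw_measure R)
    = (if j = i then (\<integral>\<^sup>+k. of_bool (i < k) \<partial>measure_pmf R) * (\<integral>\<^sup>+N. (G N)^2 \<partial>gw_measure R)
       else (\<integral>\<^sup>+k. of_bool (i < k \<and> j < k) \<partial>measure_pmf R) * (\<integral>\<^sup>+N. G N \<partial>gw_measure R)^2)"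
proof (cases "j = i")
  case True
  have "(\<integral>\<^sup>+N. (of_bool (i < N []) * G (child_tree i N)) * (of_bool (i < N []) * G (child_tree i N))
      \<partial>gw_measure R) = (\<integral>\<^sup>+N. of_bool (i < N []) * (\<Prod>l\<in>{i}. (G (child_tree l N))^2) \<partial>gw_measure R)"
    by (intro nn_integral_cong) (simp add: of_bool_def power2_eq_square)
  also have "\<dots> = (\<integral>\<^sup>+k. of_bool (i < k) \<partial>measure_pmf R) * (\<Prod>l\<in>{i}. \<integral>\<^sup>+N. (G N)^2 \<partial>gw_measure R)"
    by (rule nn_integral_root_child_trees_prod) auto
  finally show ?thesis using True by simp
next
  case False
  then show ?thesis
    using nn_integral_root_child_trees_prod[where G="\<lambda>_. G" and F="{i, j}"
        and h="\<lambda>k. of_bool (i < k \<and> j < k)"]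
    by (simp add: power2_eq_square of_bool_conj mult_ac)
qed

lemma nn_integral_children_sum_square:
  assumes [measurable]: "G \<in> borel_measurable (gw_measure R)"
  shows "(\<integral>\<^sup>+N. (children_sum G N)^2 \<partial>gw_measure R)
    = nn_mean R * (\<integral>\<^sup>+N. (G N)^2 \<partial>gw_measure R)
      + nn_factorial_moment2 R * (\<integral>\<^sup>+N. G N \<partial>gw_measure R)^2"
proof -
  define b where "b = (\<lambda>i N. of_bool (i < N []) * G (child_tree i N))"
  define E1 where "E1 = (\<integral>\<^sup>+N. G N \<partial>gw_measure R)"
  define E2 where "E2 = (\<integral>\<^sup>+N. (G N)^2 \<partial>gw_measure R)"
  define P where "P = (\<lambda>i j. \<integral>\<^sup>+k. of_bool (i < k \<and> j < k) \<partial>measure_pmf R)"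
  have [measurable]: "b i \<in> borel_measurable (gw_measure R)" for i
    unfolding b_def by measurable
  have square: "(children_sum G N)^2 = (\<Sum>i. \<Sum>j. b i N * b j N)" for N
  proof -
    have "children_sum G N = (\<Sum>i. b i N)"
      unfolding children_sum_eq_suminf b_def ..
    then show ?thesis
      by (simp only: power2_eq_square ennreal_suminf_multc[symmetric] ennreal_suminf_cmult)
  qed
  have "(\<integral>\<^sup>+N. (children_sum G N)^2 \<partial>gw_measure R)
      = (\<Sum>i. \<Sum>j. \<integral>\<^sup>+N. b i N * b j N \<partial>gw_measure R)"
    unfolding square by (subst nn_integral_suminf) (measurable, intro suminf_cong nn_integral_suminf, measurable)
  also have "\<dots> = (\<Sum>i. P i i * E2 + (\<Sum>j. of_bool (j \<noteq> i) * P i j * E1^2))"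
  proof (intro suminf_cong)
    fix i
    have "(\<Sum>j. \<integral>\<^sup>+N. b i N * b j N \<partial>gw_measure R)
        = (\<Sum>j. of_bool (j = i) * (P i i * E2) + of_bool (j \<noteq> i) * P i j * E1^2)"
      unfolding b_def nn_integral_children_pair[OF assms]
      by (intro suminf_cong) (simp add: P_def E1_def E2_def)
    also have "\<dots> = P i i * E2 + (\<Sum>j. of_bool (j \<noteq> i) * P i j * E1^2)"
      using suminf_finite[of "{i}" "\<lambda>j. of_bool (j = i) :: ennreal"]
      by (simp add: suminf_add[symmetric] ennreal_suminf_multc)
    finally show "(\<Sum>j. \<integral>\<^sup>+N. b i N * b j N \<partial>gw_measure R)
        = P i i * E2 + (\<Sum>j. of_bool (j \<noteq> i) * P i j * E1^2)" .
  qed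
  also have "\<dots> = (\<Sum>i. P i i) * E2 + (\<Sum>i. \<Sum>j. of_bool (j \<noteq> i) * P i j) * E1^2"
    by (simp only: ennreal_suminf_multc suminf_add[OF summableI summableI, symmetric])
  finally show ?thesis
    by (simp add: P_def E1_def E2_def suminf_nn_integral_of_bool_less
        suminf_suminf_nn_integral_of_bool_distinct_less)
qed

section \<open>Moments of the hitting time of the extra root\<close>

definition up_prob :: "real \<Rightarrow> (nat list \<Rightarrow> nat) \<Rightarrow> nat list \<Rightarrow> real" where
  "up_prob \<beta> N u = 1 / (1 + \<beta> * real (N u))"

definition down_prob :: "real \<Rightarrow> (nat list \<Rightarrow> nat) \<Rightarrow> nat list \<Rightarrow> real" where
  "down_prob \<beta> N u = \<beta> / (1 + \<beta> * real (N u))"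

text \<open>The first-hitting law of the extra root from the parent of \<open>u\<close>; the parent of the root
  \<open>[]\<close> is the extra root itself, which is hit at time \<open>0\<close>.\<close>

definition parent_first_hit :: "real \<Rightarrow> (nat list \<Rightarrow> nat) \<Rightarrow> nat \<Rightarrow> nat list \<Rightarrow> real" where
  "parent_first_hit \<beta> N n u =
    (if u = [] then (if n = 0 then 1 else 0) else first_hit \<beta> N n (butlast u))"

lemma first_hit_Suc_up_down:
  "first_hit \<beta> N (Suc n) u = up_prob \<beta> N u * parent_first_hit \<beta> N n u
     + down_prob \<beta> N u * (\<Sum>i<N u. first_hit \<beta> N n (u @ [i]))"
  by (simp add: up_prob_def down_prob_def parent_first_hit_def sum_distrib_left)

declare first_hit.simps(2) [simp del]

lemma up_prob_add_down_prob:
  "\<beta> \<ge> 0 \<Longrightarrow> up_prob \<beta> N u + down_prob \<beta> N u * real (N u) = 1"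
proof -
  assume "\<beta> \<ge> 0"
  then have "1 + \<beta> * real (N u) > 0" by (simp add: add_pos_nonneg)
  then show ?thesis unfolding up_prob_def down_prob_def by (simp add: field_simps)
qed

lemma up_prob_nonneg: "\<beta> \<ge> 0 \<Longrightarrow> up_prob \<beta> N u \<ge> 0"
  unfolding up_prob_def by (simp add: add_pos_nonneg)

lemma down_prob_nonneg: "\<beta> \<ge> 0 \<Longrightarrow> down_prob \<beta> N u \<ge> 0"
  unfolding down_prob_def by (simp add: add_pos_nonneg)

lemma first_hit_nonneg: "\<beta> \<ge> 0 \<Longrightarrow> first_hit \<beta> N n u \<ge> 0"
proof (induction n arbitrary: u)
  case (Suc n)
  then have "parent_first_hit \<beta> N n u \<ge> 0"
    by (simp add: parent_first_hit_def)
  with Suc show ?case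
    by (simp add: first_hit_Suc_up_down up_prob_nonneg down_prob_nonneg sum_nonneg)
qed simp

lemma sum_first_hit_le_1: "\<beta> \<ge> 0 \<Longrightarrow> (\<Sum>n\<le>T. first_hit \<beta> N n u) \<le> 1"
proof (induction T arbitrary: u)
  case (Suc T)
  have parent: "(\<Sum>n\<le>T. parent_first_hit \<beta> N n u) \<le> 1"
    using Suc by (cases "u = []") (simp_all add: parent_first_hit_def sum.delta)
  have "(\<Sum>n\<le>Suc T. first_hit \<beta> N n u) = up_prob \<beta> N u * (\<Sum>n\<le>T. parent_first_hit \<beta> N n u)
      + down_prob \<beta> N u * (\<Sum>i<N u. \<Sum>n\<le>T. first_hit \<beta> N n (u @ [i]))"
    by (subst sum.atMost_Suc_shift)
       (simp add: first_hit_Suc_up_down sum.distrib sum_distrib_left sum.swap[of _ "{..<N u}"])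
  also have "\<dots> \<le> up_prob \<beta> N u * 1 + down_prob \<beta> N u * (\<Sum>i<N u. 1)"
    using Suc parent
    by (intro add_mono mult_left_mono sum_mono) (auto simp: up_prob_nonneg down_prob_nonneg)
  also have "\<dots> = 1"
    using up_prob_add_down_prob[OF Suc.prems] by simp
  finally show ?case .
qed simp

text \<open>\<open>stopped_moment \<beta> N \<phi> T u\<close> is \<open>E\<^sub>u[\<phi>(min \<tau> T)]\<close>, where \<open>\<tau>\<close> is the hitting time of the
  extra root.\<close>

definition stopped_moment ::
  "real \<Rightarrow> (nat list \<Rightarrow> nat) \<Rightarrow> (nat \<Rightarrow> real) \<Rightarrow> nat \<Rightarrow> nat list \<Rightarrow> real" where
  "stopped_moment \<beta> N \<phi> T u =
    (\<Sum>n\<le>T. \<phi> n * first_hit \<beta> N n u) + \<phi> T * (1 - (\<Sum>n\<le>T. first_hit \<beta> N n u))"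

lemma stopped_moment_affine:
  "stopped_moment \<beta> N (\<lambda>n. a * \<phi> n + b * \<psi> n + c) T u
    = a * stopped_moment \<beta> N \<phi> T u + b * stopped_moment \<beta> N \<psi> T u + c"
  unfolding stopped_moment_def by (simp add: algebra_simps sum.distrib sum_distrib_left)

lemma stopped_moment_Suc_shift:
  "stopped_moment \<beta> N (real \<circ> Suc) T u = stopped_moment \<beta> N real T u + 1"
  "stopped_moment \<beta> N ((\<lambda>n. (real n)^2) \<circ> Suc) T u
    = stopped_moment \<beta> N (\<lambda>n. (real n)^2) T u + 2 * stopped_moment \<beta> N real T u + 1"
  using stopped_moment_affine[of \<beta> N 0 "\<lambda>_. 0" 1 real 1 T u]
    stopped_moment_affine[of \<beta> N 1 "\<lambda>n. (real n)^2" 2 real 1 T u]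
  by (simp_all add: o_def power2_eq_square algebra_simps)

lemma stopped_moment_Suc:
  assumes "\<beta> \<ge> 0"
  shows "stopped_moment \<beta> N \<phi> (Suc T) u =
      up_prob \<beta> N u * (if u = [] then \<phi> 1 else stopped_moment \<beta> N (\<phi> \<circ> Suc) T (butlast u))
      + down_prob \<beta> N u * (\<Sum>i<N u. stopped_moment \<beta> N (\<phi> \<circ> Suc) T (u @ [i]))"
proof -
  define p where "p = up_prob \<beta> N u"
  define c where "c = down_prob \<beta> N u"
  define X where "X = (\<Sum>n\<le>T. \<phi> (Suc n) * parent_first_hit \<beta> N n u)"
  define E where "E = (\<Sum>n\<le>T. parent_first_hit \<beta> N n u)"
  define Y where "Y = (\<lambda>i. \<Sum>n\<le>T. \<phi> (Suc n) * first_hit \<beta> N n (u @ [i]))"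
  define Z where "Z = (\<lambda>i. \<Sum>n\<le>T. first_hit \<beta> N n (u @ [i]))"
  have moment: "(\<Sum>n\<le>Suc T. \<phi> n * first_hit \<beta> N n u) = p * X + c * (\<Sum>i<N u. Y i)"
    by (subst sum.atMost_Suc_shift, simp add: first_hit_Suc_up_down sum.distrib sum_distrib_left
        sum.swap[of _ "{..<N u}"] p_def c_def X_def Y_def algebra_simps)
  have mass: "(\<Sum>n\<le>Suc T. first_hit \<beta> N n u) = p * E + c * (\<Sum>i<N u. Z i)"
    by (subst sum.atMost_Suc_shift, simp add: first_hit_Suc_up_down sum.distrib sum_distrib_left
        sum.swap[of _ "{..<N u}"] p_def c_def E_def Z_def)
  have "p + c * real (N u) = 1"
    using up_prob_add_down_prob[OF assms] by (simp add: p_def c_def)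
  then have "stopped_moment \<beta> N \<phi> (Suc T) u = p * X + c * (\<Sum>i<N u. Y i)
      + \<phi> (Suc T) * (p + c * (\<Sum>i<N u. 1) - (p * E + c * (\<Sum>i<N u. Z i)))"
    unfolding stopped_moment_def moment mass by simp
  also have "\<dots> = p * (X + \<phi> (Suc T) * (1 - E)) + c * (\<Sum>i<N u. Y i + \<phi> (Suc T) * (1 - Z i))"
    by (simp add: algebra_simps sum.distrib sum_distrib_left sum_subtractf)
  also have "X + \<phi> (Suc T) * (1 - E)
      = (if u = [] then \<phi> 1 else stopped_moment \<beta> N (\<phi> \<circ> Suc) T (butlast u))"
  proof (cases "u = []")
    case True
    have "X = (\<Sum>n\<le>T. if n = 0 then \<phi> (Suc n) else 0)"
      unfolding X_def parent_first_hit_def using True by (intro sum.cong) auto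
    moreover have "E = 1"
      unfolding E_def parent_first_hit_def using True by (simp add: sum.delta)
    ultimately have "X = \<phi> 1" "E = 1" by (simp_all add: sum.delta)
    then show ?thesis using True by simp
  qed (simp add: X_def E_def parent_first_hit_def stopped_moment_def)
  also have "(\<Sum>i<N u. Y i + \<phi> (Suc T) * (1 - Z i))
      = (\<Sum>i<N u. stopped_moment \<beta> N (\<phi> \<circ> Suc) T (u @ [i]))"
    by (simp add: Y_def Z_def stopped_moment_def)
  finally show ?thesis by (simp add: p_def c_def)
qed

definition ancestral_sum :: "(nat list \<Rightarrow> real) \<Rightarrow> nat list \<Rightarrow> real" where
  "ancestral_sum f u = (\<Sum>j\<le>length u. f (take j u))"

lemma ancestral_sum_Nil [simp]: "ancestral_sum f [] = f []"
  unfolding ancestral_sum_def by simp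

lemma ancestral_sum_snoc [simp]: "ancestral_sum f (u @ [i]) = ancestral_sum f u + f (u @ [i])"
  unfolding ancestral_sum_def by (simp add: sum.atMost_Suc)

lemma ancestral_sum_parent:
  "(if u = [] then 0 else ancestral_sum f (butlast u)) = ancestral_sum f u - f u"
  using ancestral_sum_snoc[of f "butlast u" "last u"] by (cases "u = []") simp_all

lemma ancestral_sum_nonneg:
  "(\<And>v. v \<in> gw_tree N \<Longrightarrow> f v \<ge> 0) \<Longrightarrow> u \<in> gw_tree N \<Longrightarrow> ancestral_sum f u \<ge> 0"
  unfolding ancestral_sum_def by (intro sum_nonneg) (simp add: gw_tree_take)

lemma up_down_combination_eq:
  assumes "\<beta> \<ge> 0" and "a + \<beta> * b = x * (1 + \<beta> * real (N u))"
  shows "up_prob \<beta> N u * a + down_prob \<beta> N u * b = x"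
proof -
  have "1 + \<beta> * real (N u) > 0" using assms(1) by (simp add: add_pos_nonneg)
  moreover have "up_prob \<beta> N u * a + down_prob \<beta> N u * b = (a + \<beta> * b) / (1 + \<beta> * real (N u))"
    unfolding up_prob_def down_prob_def by (simp add: add_divide_distrib)
  ultimately show ?thesis using assms(2) by simp
qed

lemma up_down_combination_mono:
  assumes "\<beta> \<ge> 0" and "a \<le> a'" and "\<And>i. i < N u \<Longrightarrow> b i \<le> b' i"
  shows "up_prob \<beta> N u * a + down_prob \<beta> N u * (\<Sum>i<N u. b i)
    \<le> up_prob \<beta> N u * a' + down_prob \<beta> N u * (\<Sum>i<N u. b' i)"
  using assms by (intro add_mono mult_left_mono sum_mono) (auto simp: up_prob_nonneg down_prob_nonneg)

locale walk_potential =
  fixes \<beta> :: real and N :: "nat list \<Rightarrow> nat" and y k :: "nat list \<Rightarrow> real"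
  assumes beta_pos: "\<beta> > 0"
    and y_rec: "\<And>u. u \<in> gw_tree N \<Longrightarrow> y u = 1 + \<beta> * (\<Sum>i<N u. y (u @ [i]))"
    and k_rec: "\<And>u. u \<in> gw_tree N \<Longrightarrow> k u = 4 * (y u - 1)^2
        + 4 * \<beta> * (\<Sum>i<N u. (y (u @ [i]))^2) + \<beta> * (\<Sum>i<N u. k (u @ [i]))"
    and y_ge_1: "\<And>u. u \<in> gw_tree N \<Longrightarrow> y u \<ge> 1"
    and k_nonneg: "\<And>u. u \<in> gw_tree N \<Longrightarrow> k u \<ge> 0"
begin

definition first_moment_bound :: "nat list \<Rightarrow> real" where
  "first_moment_bound = ancestral_sum (\<lambda>v. 2 * y v - 1)"

definition second_moment_bound :: "nat list \<Rightarrow> real" where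
  "second_moment_bound u = (first_moment_bound u)^2 + ancestral_sum k u"

lemma first_moment_bound_nonneg: "u \<in> gw_tree N \<Longrightarrow> first_moment_bound u \<ge> 0"
  unfolding first_moment_bound_def using y_ge_1
  by (intro ancestral_sum_nonneg) fastforce+

lemma second_moment_bound_nonneg: "u \<in> gw_tree N \<Longrightarrow> second_moment_bound u \<ge> 0"
  unfolding second_moment_bound_def
  by (intro add_nonneg_nonneg zero_le_power2 ancestral_sum_nonneg k_nonneg)

lemma first_moment_bound_harmonic:
  assumes u: "u \<in> gw_tree N"
  shows "up_prob \<beta> N u * ((if u = [] then 0 else first_moment_bound (butlast u)) + 1)
    + down_prob \<beta> N u * (\<Sum>i<N u. first_moment_bound (u @ [i]) + 1) = first_moment_bound u"
proof (rule up_down_combination_eq)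
  define F where "F = first_moment_bound u"
  have "(\<Sum>i<N u. (2 * y (u @ [i]) - 1) + 1) = 2 * (\<Sum>i<N u. y (u @ [i]))"
    by (simp add: sum_distrib_left)
  then have "2 * y u - 1 = 1 + \<beta> * (\<Sum>i<N u. (2 * y (u @ [i]) - 1) + 1)"
    using y_rec[OF u] by simp
  then show "((if u = [] then 0 else first_moment_bound (butlast u)) + 1)
      + \<beta> * (\<Sum>i<N u. first_moment_bound (u @ [i]) + 1) = F * (1 + \<beta> * real (N u))"
    unfolding first_moment_bound_def ancestral_sum_parent F_def
    by (simp add: sum.distrib algebra_simps)
qed (use beta_pos in simp)

lemma second_moment_bound_harmonic:
  assumes u: "u \<in> gw_tree N"
  shows "up_prob \<beta> N u * ((if u = [] then 0
        else second_moment_bound (butlast u) + 2 * first_moment_bound (butlast u)) + 1)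
    + down_prob \<beta> N u * (\<Sum>i<N u. second_moment_bound (u @ [i])
        + 2 * first_moment_bound (u @ [i]) + 1)
    = second_moment_bound u"
proof (rule up_down_combination_eq)
  define g where "g = (\<lambda>v. 2 * y v - 1)"
  define F where "F = first_moment_bound u"
  define H where "H = ancestral_sum k u"
  define n where "n = real (N u)"
  define sg where "sg = (\<Sum>i<N u. g (u @ [i]))"
  define sg2 where "sg2 = (\<Sum>i<N u. (g (u @ [i]))^2)"
  define sk where "sk = (\<Sum>i<N u. k (u @ [i]))"
  have y_eq: "1 - g u + \<beta> * (n + sg) = 0"
    using y_rec[OF u]
    by (simp add: g_def n_def sg_def sum_subtractf sum_distrib_left algebra_simps)
  have "n + 2 * sg + sg2 = 4 * (\<Sum>i<N u. (y (u @ [i]))^2)"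
    by (simp add: n_def sg_def sg2_def g_def power2_eq_square algebra_simps sum.distrib
        sum_distrib_left sum_subtractf)
  then have k_eq: "(1 - g u)^2 + \<beta> * (n + 2 * sg + sg2) = k u - \<beta> * sk"
    using k_rec[OF u] by (simp add: g_def sk_def power2_eq_square algebra_simps)
  have parent: "(if u = [] then 0 else second_moment_bound (butlast u)
      + 2 * first_moment_bound (butlast u)) = (F - g u)^2 + (H - k u) + 2 * (F - g u)"
    using ancestral_sum_parent[of u g] ancestral_sum_parent[of u k]
    by (auto simp: second_moment_bound_def first_moment_bound_def F_def H_def g_def
        split: if_splits)
  have children: "(\<Sum>i<N u. second_moment_bound (u @ [i]) + 2 * first_moment_bound (u @ [i]) + 1)
      = n * (F^2 + H + 2 * F + 1) + (2 * F + 2) * sg + sg2 + sk"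
    by (simp add: second_moment_bound_def first_moment_bound_def F_def H_def g_def n_def sg_def
        sg2_def sk_def power2_eq_square algebra_simps sum.distrib sum_distrib_left sum_subtractf)
  have "((F - g u)^2 + (H - k u) + 2 * (F - g u) + 1)
      + \<beta> * (n * (F^2 + H + 2 * F + 1) + (2 * F + 2) * sg + sg2 + sk)
      = (F^2 + H) * (1 + \<beta> * n) + 2 * F * (1 - g u + \<beta> * (n + sg))
        + ((1 - g u)^2 + \<beta> * (n + 2 * sg + sg2) - k u + \<beta> * sk)"
    by (simp add: power2_eq_square algebra_simps)
  then show "(if u = [] then 0 else second_moment_bound (butlast u)
        + 2 * first_moment_bound (butlast u)) + 1
      + \<beta> * (\<Sum>i<N u. second_moment_bound (u @ [i]) + 2 * first_moment_bound (u @ [i]) + 1)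
      = second_moment_bound u * (1 + \<beta> * real (N u))"
    unfolding parent children using y_eq k_eq
    by (simp add: second_moment_bound_def F_def H_def n_def)
qed (use beta_pos in simp)

lemma stopped_moments_le:
  assumes "u \<in> gw_tree N"
  shows "stopped_moment \<beta> N real T u \<le> first_moment_bound u
    \<and> stopped_moment \<beta> N (\<lambda>n. (real n)^2) T u \<le> second_moment_bound u"
  using assms
proof (induction T arbitrary: u)
  case 0
  then show ?case
    by (simp add: stopped_moment_def first_moment_bound_nonneg second_moment_bound_nonneg)
next
  case (Suc T)
  define M where "M = stopped_moment \<beta> N real T"
  define Q where "Q = stopped_moment \<beta> N (\<lambda>n. (real n)^2) T"
  have parent: "(if u = [] then 0 else M (butlast u)) \<le> (if u = [] then 0 else first_moment_bound (butlast u))"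
    "(if u = [] then 0 else Q (butlast u) + 2 * M (butlast u))
      \<le> (if u = [] then 0 else second_moment_bound (butlast u) + 2 * first_moment_bound (butlast u))"
    using Suc.IH[OF gw_tree_butlast[OF Suc.prems]] by (auto simp: M_def Q_def)
  have children: "M (u @ [i]) \<le> first_moment_bound (u @ [i])"
    "Q (u @ [i]) + 2 * M (u @ [i]) \<le> second_moment_bound (u @ [i]) + 2 * first_moment_bound (u @ [i])"
    if "i < N u" for i
    using Suc.IH[of "u @ [i]"] Suc.prems that by (auto simp: gw_tree_snoc M_def Q_def)
  have "stopped_moment \<beta> N real (Suc T) u = up_prob \<beta> N u * ((if u = [] then 0 else M (butlast u)) + 1)
      + down_prob \<beta> N u * (\<Sum>i<N u. M (u @ [i]) + 1)"
    by (simp add: stopped_moment_Suc[OF less_imp_le[OF beta_pos]] stopped_moment_Suc_shift M_def)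
  also have "\<dots> \<le> first_moment_bound u"
    unfolding first_moment_bound_harmonic[OF Suc.prems, symmetric] using beta_pos parent children
    by (intro up_down_combination_mono) auto
  finally have first: "stopped_moment \<beta> N real (Suc T) u \<le> first_moment_bound u" .
  have "stopped_moment \<beta> N (\<lambda>n. (real n)^2) (Suc T) u
      = up_prob \<beta> N u * ((if u = [] then 0 else Q (butlast u) + 2 * M (butlast u)) + 1)
      + down_prob \<beta> N u * (\<Sum>i<N u. Q (u @ [i]) + 2 * M (u @ [i]) + 1)"
    by (simp add: stopped_moment_Suc[OF less_imp_le[OF beta_pos]] stopped_moment_Suc_shift M_def Q_def)
  also have "\<dots> \<le> second_moment_bound u"
    unfolding second_moment_bound_harmonic[OF Suc.prems, symmetric] using beta_pos parent children
    by (intro up_down_combination_mono) auto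
  finally show ?case using first by simp
qed

lemma partial_return_time_second_moment_le:
  "(\<Sum>m\<le>T. (real m + 1)^2 * first_hit \<beta> N m []) \<le> 4 * (y [])^2 + k []"
proof -
  have "(\<Sum>m\<le>T. (real m + 1)^2 * first_hit \<beta> N m [])
      \<le> stopped_moment \<beta> N ((\<lambda>n. (real n)^2) \<circ> Suc) T []"
    unfolding stopped_moment_def using sum_first_hit_le_1[where T=T and N=N and u="[]"] beta_pos
    by (intro add_increasing2 mult_nonneg_nonneg) (auto simp: add.commute)
  also have "\<dots> \<le> second_moment_bound [] + 2 * first_moment_bound [] + 1"
    using stopped_moments_le[OF gw_tree_Nil, of T] by (simp add: stopped_moment_Suc_shift)
  also have "\<dots> = 4 * (y [])^2 + k []"
    by (simp add: second_moment_bound_def first_moment_bound_def power2_eq_square algebra_simps)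
  finally show ?thesis .
qed

lemma one_le_return_prob: "1 \<le> (\<Sum>m. ennreal (first_hit \<beta> N m []))"
proof (rule ccontr)
  assume "\<not> 1 \<le> (\<Sum>m. ennreal (first_hit \<beta> N m []))"
  then have less_1: "(\<Sum>m. ennreal (first_hit \<beta> N m [])) < 1" by simp
  then have "(\<Sum>m. ennreal (first_hit \<beta> N m [])) < \<top>"
    using less_le_trans by fastforce
  then obtain s where s: "(\<Sum>m. ennreal (first_hit \<beta> N m [])) = ennreal s" "0 \<le> s"
    using ennreal_enn2real less_top enn2real_nonneg by metis
  then have "s < 1" using less_1 by (simp add: ennreal_less_one_iff)
  have fh_nonneg: "first_hit \<beta> N m [] \<ge> 0" for m
    using beta_pos by (simp add: first_hit_nonneg)
  have partial: "(\<Sum>m\<le>T. first_hit \<beta> N m []) \<le> s" for T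
  proof -
    have "ennreal (\<Sum>m\<le>T. first_hit \<beta> N m []) = (\<Sum>m\<le>T. ennreal (first_hit \<beta> N m []))"
      using fh_nonneg by simp
    also have "\<dots> \<le> (\<Sum>m. ennreal (first_hit \<beta> N m []))"
      by (intro sum_le_suminf summableI) auto
    finally have "ennreal (\<Sum>m\<le>T. first_hit \<beta> N m []) \<le> (\<Sum>m. ennreal (first_hit \<beta> N m []))" .
    then show ?thesis using s by simp
  qed
  obtain T :: nat where T: "real T > first_moment_bound [] / (1 - s)"
    using reals_Archimedean2 by blast
  have "real T * (1 - s) \<le> real T * (1 - (\<Sum>m\<le>T. first_hit \<beta> N m []))"
    using partial[of T] by (intro mult_left_mono) auto
  also have "\<dots> \<le> stopped_moment \<beta> N real T []"
    unfolding stopped_moment_def using fh_nonneg by (intro add_increasing sum_nonneg) auto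
  also have "\<dots> \<le> first_moment_bound []"
    using stopped_moments_le[OF gw_tree_Nil] by blast
  finally show False using T \<open>s < 1\<close> by (simp add: field_simps)
qed

lemma return_time_second_moment_le:
  "return_time_second_moment \<beta> N \<le> ennreal (4 * (y [])^2 + k [])"
proof -
  have "(\<Sum>m. ennreal ((real m + 1)^2 * first_hit \<beta> N m [])) \<le> ennreal (4 * (y [])^2 + k [])"
  proof (rule suminf_le_const[OF summableI])
    fix n
    have "(\<Sum>m<n. (real m + 1)^2 * first_hit \<beta> N m []) \<le> (\<Sum>m\<le>n. (real m + 1)^2 * first_hit \<beta> N m [])"
      using beta_pos by (intro sum_mono2) (auto simp: first_hit_nonneg)
    also have "\<dots> \<le> 4 * (y [])^2 + k []"
      by (rule partial_return_time_second_moment_le)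
    finally show "(\<Sum>m<n. ennreal ((real m + 1)^2 * first_hit \<beta> N m [])) \<le> ennreal (4 * (y [])^2 + k [])"
      using beta_pos by (simp add: first_hit_nonneg ennreal_leI)
  qed
  moreover have "\<not> (\<Sum>m. ennreal (first_hit \<beta> N m [])) < 1"
    using one_le_return_prob by (simp add: not_less)
  ultimately show ?thesis
    unfolding return_time_second_moment_def by simp
qed

end

section \<open>Discounted sums over the vertices of a Galton--Watson tree\<close>

text \<open>\<open>level_sum d \<phi> N\<close> sums \<open>\<phi>\<close> over the subtrees rooted at the vertices of depth \<open>d\<close>.\<close>

fun level_sum :: "nat \<Rightarrow> ((nat list \<Rightarrow> nat) \<Rightarrow> ennreal) \<Rightarrow> (nat list \<Rightarrow> nat) \<Rightarrow> ennreal" where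
  "level_sum 0 \<phi> = \<phi>"
| "level_sum (Suc d) \<phi> = children_sum (level_sum d \<phi>)"

definition discounted_sum :: "real \<Rightarrow> ((nat list \<Rightarrow> nat) \<Rightarrow> ennreal) \<Rightarrow> (nat list \<Rightarrow> nat) \<Rightarrow> ennreal" where
  "discounted_sum \<beta> \<phi> N = (\<Sum>d. ennreal (\<beta>^d) * level_sum d \<phi> N)"

lemma suminf_ennreal_split_head: "(\<Sum>n. f n :: ennreal) = f 0 + (\<Sum>n. f (Suc n))"
proof -
  have "f sums ((\<Sum>n. f (Suc n)) + f 0)"
    by (intro sums_Suc summable_sums summableI)
  then show ?thesis by (simp add: sums_unique[symmetric] add.commute)
qed

lemma discounted_sum_rec:
  assumes "\<beta> \<ge> 0"
  shows "discounted_sum \<beta> \<phi> N = \<phi> N + ennreal \<beta> * children_sum (discounted_sum \<beta> \<phi>) N"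
proof -
  have "discounted_sum \<beta> \<phi> N = \<phi> N + (\<Sum>d. ennreal (\<beta>^Suc d) * level_sum (Suc d) \<phi> N)"
    unfolding discounted_sum_def by (subst suminf_ennreal_split_head) simp
  also have "(\<Sum>d. ennreal (\<beta>^Suc d) * level_sum (Suc d) \<phi> N)
      = (\<Sum>d. ennreal \<beta> * (\<Sum>i<N []. ennreal (\<beta>^d) * level_sum d \<phi> (child_tree i N)))"
    using assms
    by (intro suminf_cong) (simp add: children_sum_def ennreal_mult sum_distrib_left mult.assoc)
  also have "\<dots> = ennreal \<beta> * children_sum (discounted_sum \<beta> \<phi>) N"
    by (simp add: suminf_sum summableI children_sum_def discounted_sum_def)
  finally show ?thesis .
qed

lemma borel_measurable_level_sum [measurable]:
  "\<phi> \<in> borel_measurable (gw_measure R) \<Longrightarrow> level_sum d \<phi> \<in> borel_measurable (gw_measure R)"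
  by (induction d) auto

lemma borel_measurable_discounted_sum [measurable]:
  assumes [measurable]: "\<phi> \<in> borel_measurable (gw_measure R)"
  shows "discounted_sum \<beta> \<phi> \<in> borel_measurable (gw_measure R)"
  unfolding discounted_sum_def[abs_def] by measurable

lemma nn_integral_level_sum:
  "\<phi> \<in> borel_measurable (gw_measure R) \<Longrightarrow>
    (\<integral>\<^sup>+N. level_sum d \<phi> N \<partial>gw_measure R) = nn_mean R ^ d * (\<integral>\<^sup>+N. \<phi> N \<partial>gw_measure R)"
  by (induction d) (simp_all add: nn_integral_children_sum mult.assoc)

lemma suminf_ennreal_geometric:
  assumes "0 \<le> \<beta>" "0 \<le> m" "\<beta> * m < 1"
  shows "(\<Sum>d. ennreal (\<beta>^d) * ennreal m ^ d) = ennreal (1 / (1 - \<beta> * m))"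
proof -
  have "(\<Sum>d. ennreal (\<beta>^d) * ennreal m ^ d) = (\<Sum>d. ennreal ((\<beta> * m)^d))"
    using assms by (intro suminf_cong) (simp add: ennreal_power ennreal_mult power_mult_distrib)
  also have "\<dots> = ennreal (\<Sum>d. (\<beta> * m)^d)"
    using assms by (intro suminf_ennreal2) (auto intro!: summable_geometric)
  also have "(\<Sum>d. (\<beta> * m)^d) = 1 / (1 - \<beta> * m)"
    using assms by (intro suminf_geometric) simp
  finally show ?thesis .
qed

lemma nn_integral_discounted_sum:
  assumes [measurable]: "\<phi> \<in> borel_measurable (gw_measure R)"
    and "\<beta> \<ge> 0" "nn_mean R = ennreal m" "m \<ge> 0" "\<beta> * m < 1"
  shows "(\<integral>\<^sup>+N. discounted_sum \<beta> \<phi> N \<partial>gw_measure R)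
    = ennreal (1 / (1 - \<beta> * m)) * (\<integral>\<^sup>+N. \<phi> N \<partial>gw_measure R)"
proof -
  have "(\<integral>\<^sup>+N. discounted_sum \<beta> \<phi> N \<partial>gw_measure R)
      = (\<Sum>d. \<integral>\<^sup>+N. ennreal (\<beta>^d) * level_sum d \<phi> N \<partial>gw_measure R)"
    unfolding discounted_sum_def by (rule nn_integral_suminf) measurable
  also have "\<dots> = (\<Sum>d. ennreal (\<beta>^d) * nn_mean R ^ d) * (\<integral>\<^sup>+N. \<phi> N \<partial>gw_measure R)"
    by (simp add: nn_integral_cmult nn_integral_level_sum ennreal_suminf_multc[symmetric] mult.assoc)
  finally show ?thesis using assms by (simp add: suminf_ennreal_geometric)
qed

definition discounted_size :: "real \<Rightarrow> (nat list \<Rightarrow> nat) \<Rightarrow> ennreal" where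
  "discounted_size \<beta> = discounted_sum \<beta> (\<lambda>_. 1)"

definition discounted_size_upto :: "real \<Rightarrow> nat \<Rightarrow> (nat list \<Rightarrow> nat) \<Rightarrow> ennreal" where
  "discounted_size_upto \<beta> n N = (\<Sum>d<n. ennreal (\<beta>^d) * level_sum d (\<lambda>_. 1) N)"

lemma discounted_size_upto_Suc:
  assumes "\<beta> \<ge> 0"
  shows "discounted_size_upto \<beta> (Suc n) N = 1 + ennreal \<beta> * children_sum (discounted_size_upto \<beta> n) N"
proof -
  have "discounted_size_upto \<beta> (Suc n) N
      = 1 + (\<Sum>d<n. ennreal (\<beta>^Suc d) * level_sum (Suc d) (\<lambda>_. 1) N)"
    unfolding discounted_size_upto_def by (subst sum.lessThan_Suc_shift) simp
  also have "(\<Sum>d<n. ennreal (\<beta>^Suc d) * level_sum (Suc d) (\<lambda>_. 1) N)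
      = (\<Sum>d<n. ennreal \<beta> * (\<Sum>i<N []. ennreal (\<beta>^d) * level_sum d (\<lambda>_. 1) (child_tree i N)))"
    using assms
    by (intro sum.cong) (simp_all add: children_sum_def ennreal_mult sum_distrib_left mult.assoc)
  also have "\<dots> = ennreal \<beta> * children_sum (discounted_size_upto \<beta> n) N"
    by (simp add: children_sum_def discounted_size_upto_def sum_distrib_left[symmetric]
        sum.swap[of _ "{..<n}"])
  finally show ?thesis .
qed

lemma discounted_size_eq_SUP: "discounted_size \<beta> N = (SUP n. discounted_size_upto \<beta> n N)"
  unfolding discounted_size_def discounted_sum_def discounted_size_upto_def
  by (rule suminf_eq_SUP)

lemma incseq_discounted_size_upto: "incseq (\<lambda>n. discounted_size_upto \<beta> n N)"
  unfolding discounted_size_upto_def incseq_def by (auto intro: sum_mono2)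

lemma borel_measurable_discounted_size_upto [measurable]:
  "discounted_size_upto \<beta> n \<in> borel_measurable (gw_measure R)"
  unfolding discounted_size_upto_def[abs_def] by measurable

lemma borel_measurable_discounted_size [measurable]:
  "discounted_size \<beta> \<in> borel_measurable (gw_measure R)"
  unfolding discounted_size_def by measurable

lemma SUP_power2_ennreal:
  fixes f :: "nat \<Rightarrow> ennreal"
  assumes "incseq f"
  shows "(SUP i. f i)^2 = (SUP i. (f i)^2)"
proof (rule antisym)
  have "(SUP i. f i)^2 = (SUP j. SUP i. f i * f j)"
    by (simp add: power2_eq_square SUP_mult_left_ennreal SUP_mult_right_ennreal)
  also have "\<dots> \<le> (SUP i. (f i)^2)"
  proof (intro SUP_least)
    fix i j
    have "f i * f j \<le> f (max i j) * f (max i j)"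
      using assms by (intro mult_mono) (auto simp: incseq_def)
    also have "\<dots> \<le> (SUP i. (f i)^2)"
      by (intro SUP_upper2[of "max i j"]) (auto simp: power2_eq_square)
    finally show "f i * f j \<le> (SUP i. (f i)^2)" .
  qed
  finally show "(SUP i. f i)^2 \<le> (SUP i. (f i)^2)" .
qed (intro SUP_least power_mono, auto intro: SUP_upper)

lemma nn_integral_discounted_size:
  assumes "\<beta> \<ge> 0" "nn_mean R = ennreal m" "m \<ge> 0" "\<beta> * m < 1"
  shows "(\<integral>\<^sup>+N. discounted_size \<beta> N \<partial>gw_measure R) = ennreal (1 / (1 - \<beta> * m))"
  unfolding discounted_size_def using assms
  by (simp add: nn_integral_discounted_sum emeasure_gw_measure_UNIV)

lemma nn_integral_discounted_size_upto_square_le: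
  assumes \<beta>: "\<beta> \<ge> 0" and m: "nn_mean R = ennreal m" "m \<ge> 0"
    and v: "nn_factorial_moment2 R = ennreal v" "v \<ge> 0"
    and a: "a \<ge> 0" "\<And>n. (\<integral>\<^sup>+N. discounted_size_upto \<beta> n N \<partial>gw_measure R) \<le> ennreal a"
    and C: "C \<ge> 0" "1 + 2 * \<beta> * m * a + \<beta>^2 * (m * C + v * a^2) \<le> C"
  shows "(\<integral>\<^sup>+N. (discounted_size_upto \<beta> n N)^2 \<partial>gw_measure R) \<le> ennreal C"
proof (induction n)
  case 0
  then show ?case by (simp add: discounted_size_upto_def)
next
  case (Suc n)
  define Z where "Z = discounted_size_upto \<beta> n"
  define E1 where "E1 = (\<integral>\<^sup>+N. Z N \<partial>gw_measure R)"
  define E2 where "E2 = (\<integral>\<^sup>+N. (Z N)^2 \<partial>gw_measure R)"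
  have square: "(discounted_size_upto \<beta> (Suc n) N)^2
      = 1 + (2 * ennreal \<beta> * children_sum Z N + ennreal \<beta>^2 * (children_sum Z N)^2)" for N
    using power2_sum[of 1 "ennreal \<beta> * children_sum Z N"]
    unfolding discounted_size_upto_Suc[OF \<beta>] Z_def
    by (simp add: power_mult_distrib mult.assoc add_ac)
  have "(\<integral>\<^sup>+N. (discounted_size_upto \<beta> (Suc n) N)^2 \<partial>gw_measure R)
      = 1 + (2 * ennreal \<beta> * (ennreal m * E1) + ennreal \<beta>^2 * (ennreal m * E2 + ennreal v * E1^2))"
    unfolding square by (simp add: nn_integral_add nn_integral_cmult nn_integral_children_sum
        nn_integral_children_sum_square m v E1_def E2_def Z_def emeasure_gw_measure_UNIV)
  also have "\<dots> \<le> 1 + (2 * ennreal \<beta> * (ennreal m * ennreal a)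
      + ennreal \<beta>^2 * (ennreal m * ennreal C + ennreal v * ennreal a^2))"
    using a(2)[of n] Suc.IH unfolding E1_def E2_def Z_def
    by (intro add_mono mult_left_mono order.refl power_mono) auto
  also have "\<dots> = ennreal (1 + 2 * \<beta> * m * a + \<beta>^2 * (m * C + v * a^2))"
    using \<beta> m v a C by (simp add: ennreal_mult' ennreal_power ennreal_plus mult.assoc)
  also have "\<dots> \<le> ennreal C"
    using C(2) by (rule ennreal_leI)
  finally show ?case .
qed

text \<open>The second moment is bounded through the truncations, since a priori it may be infinite.\<close>

lemma nn_integral_discounted_size_square_finite:
  assumes \<beta>: "\<beta> \<ge> 0" and m: "nn_mean R = ennreal m" "m \<ge> 0"
    and v: "nn_factorial_moment2 R = ennreal v" "v \<ge> 0"
    and "\<beta> * m < 1" and "\<beta>^2 * m < 1"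
  shows "(\<integral>\<^sup>+N. (discounted_size \<beta> N)^2 \<partial>gw_measure R) < \<top>"
proof -
  define a where "a = 1 / (1 - \<beta> * m)"
  define C where "C = (1 + 2 * \<beta> * m * a + \<beta>^2 * v * a^2) / (1 - \<beta>^2 * m)"
  have "a \<ge> 0" using \<open>\<beta> * m < 1\<close> by (simp add: a_def)
  moreover have "C \<ge> 0" using \<open>\<beta>^2 * m < 1\<close> \<open>a \<ge> 0\<close> \<beta> m v by (simp add: C_def)
  moreover have "1 + 2 * \<beta> * m * a + \<beta>^2 * (m * C + v * a^2) = C"
    using \<open>\<beta>^2 * m < 1\<close> unfolding C_def by (simp add: field_simps)
  moreover have "(\<integral>\<^sup>+N. discounted_size_upto \<beta> n N \<partial>gw_measure R) \<le> ennreal a" for n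
  proof -
    have "(\<integral>\<^sup>+N. discounted_size_upto \<beta> n N \<partial>gw_measure R)
        \<le> (\<integral>\<^sup>+N. discounted_size \<beta> N \<partial>gw_measure R)"
      unfolding discounted_size_eq_SUP by (intro nn_integral_mono SUP_upper) simp
    then show ?thesis
      using nn_integral_discounted_size[OF \<beta> m \<open>\<beta> * m < 1\<close>] by (simp add: a_def)
  qed
  ultimately have truncated: "(\<integral>\<^sup>+N. (discounted_size_upto \<beta> n N)^2 \<partial>gw_measure R) \<le> ennreal C"
    for n by (intro nn_integral_discounted_size_upto_square_le[OF \<beta> m v]) auto
  have "incseq (\<lambda>n N. (discounted_size_upto \<beta> n N)^2)"
    using incseq_discounted_size_upto by (auto simp: incseq_def le_fun_def intro: power_mono)
  then have "(\<integral>\<^sup>+N. (discounted_size \<beta> N)^2 \<partial>gw_measure R)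
      = (SUP n. \<integral>\<^sup>+N. (discounted_size_upto \<beta> n N)^2 \<partial>gw_measure R)"
    unfolding discounted_size_eq_SUP SUP_power2_ennreal[OF incseq_discounted_size_upto]
    by (intro nn_integral_monotone_convergence_SUP) measurable
  also have "\<dots> \<le> ennreal C" by (intro SUP_least truncated)
  finally show ?thesis using le_less_trans ennreal_less_top by blast
qed

text \<open>Writing \<open>y\<close> for \<open>discounted_size \<beta>\<close>, the source term is \<open>4 (y - 1)\<^sup>2 + 4 \<beta> \<Sum>\<^sub>i y\<^sub>i\<^sup>2\<close>, so that
  \<open>second_potential \<beta>\<close> satisfies the recursion demanded of \<open>k\<close> in \<open>walk_potential\<close>.\<close>

definition second_potential_source :: "real \<Rightarrow> (nat list \<Rightarrow> nat) \<Rightarrow> ennreal" where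
  "second_potential_source \<beta> N = 4 * (ennreal \<beta> * children_sum (discounted_size \<beta>) N)^2
    + 4 * ennreal \<beta> * children_sum (\<lambda>M. (discounted_size \<beta> M)^2) N"

definition second_potential :: "real \<Rightarrow> (nat list \<Rightarrow> nat) \<Rightarrow> ennreal" where
  "second_potential \<beta> = discounted_sum \<beta> (second_potential_source \<beta>)"

lemma borel_measurable_second_potential_source [measurable]:
  "second_potential_source \<beta> \<in> borel_measurable (gw_measure R)"
  unfolding second_potential_source_def[abs_def] by measurable

lemma nn_integral_potentials_finite:
  assumes \<beta>: "\<beta> \<ge> 0" and m: "nn_mean R = ennreal m" "m \<ge> 0"
    and v: "nn_factorial_moment2 R = ennreal v" "v \<ge> 0"
    and "\<beta> * m < 1" and "\<beta>^2 * m < 1"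
  shows "(\<integral>\<^sup>+N. 4 * (discounted_size \<beta> N)^2 + second_potential \<beta> N \<partial>gw_measure R) < \<top>"
proof -
  define E1 where "E1 = (\<integral>\<^sup>+N. discounted_size \<beta> N \<partial>gw_measure R)"
  define E2 where "E2 = (\<integral>\<^sup>+N. (discounted_size \<beta> N)^2 \<partial>gw_measure R)"
  have "E1 < \<top>"
    using nn_integral_discounted_size[OF \<beta> m \<open>\<beta> * m < 1\<close>] by (simp add: E1_def)
  moreover have "E2 < \<top>"
    using nn_integral_discounted_size_square_finite[OF \<beta> m v \<open>\<beta> * m < 1\<close> \<open>\<beta>^2 * m < 1\<close>]
    by (simp add: E2_def)
  moreover have "(\<integral>\<^sup>+N. second_potential_source \<beta> N \<partial>gw_measure R)
      = 4 * (ennreal \<beta>^2 * (ennreal m * E2 + ennreal v * E1^2)) + 4 * ennreal \<beta> * (ennreal m * E2)"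
    unfolding second_potential_source_def
    by (simp add: nn_integral_add nn_integral_cmult nn_integral_children_sum
        nn_integral_children_sum_square power_mult_distrib m v E1_def E2_def)
  ultimately have "(\<integral>\<^sup>+N. second_potential \<beta> N \<partial>gw_measure R) < \<top>"
    unfolding second_potential_def using assms
    by (subst nn_integral_discounted_sum) (auto simp: ennreal_mult_less_top power_less_top_ennreal)
  then show ?thesis
    using \<open>E2 < \<top>\<close> unfolding second_potential_def
    by (simp add: nn_integral_add nn_integral_cmult E2_def ennreal_mult_less_top)
qed

definition subtree_at :: "nat list \<Rightarrow> (nat list \<Rightarrow> nat) \<Rightarrow> nat list \<Rightarrow> nat" where
  "subtree_at u N = (\<lambda>v. N (u @ v))"

lemma subtree_at_Nil [simp]: "subtree_at [] N = N"
  by (simp add: subtree_at_def)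

lemma children_sum_subtree_at:
  "children_sum G (subtree_at u N) = (\<Sum>i<N u. G (subtree_at (u @ [i]) N))"
  by (simp add: children_sum_def subtree_at_def child_tree_def)

lemma discounted_sum_subtree_at_finite:
  assumes \<beta>: "\<beta> > 0" and "discounted_sum \<beta> \<phi> N < \<top>"
  shows "u \<in> gw_tree N \<Longrightarrow> discounted_sum \<beta> \<phi> (subtree_at u N) < \<top>"
proof (induction u rule: rev_induct)
  case (snoc i u)
  then have u: "u \<in> gw_tree N" and i: "i < N u" by (auto simp: gw_tree_snoc)
  have "ennreal \<beta> * discounted_sum \<beta> \<phi> (subtree_at (u @ [i]) N)
      \<le> ennreal \<beta> * (\<Sum>j<N u. discounted_sum \<beta> \<phi> (subtree_at (u @ [j]) N))"
    using i by (intro mult_left_mono member_le_sum) auto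
  also have "\<dots> \<le> discounted_sum \<beta> \<phi> (subtree_at u N)"
    using \<beta> by (subst (2) discounted_sum_rec) (auto simp: children_sum_subtree_at)
  also have "\<dots> < \<top>" using snoc.IH[OF u] .
  finally show ?case using \<beta> by (auto simp: ennreal_mult_less_top)
qed (use assms in simp)

lemma enn2real_sum_lessThan:
  "(\<And>i. i < n \<Longrightarrow> f i < \<top>) \<Longrightarrow> enn2real (\<Sum>i<n. f i) = (\<Sum>i<n. enn2real (f i))"
  by (subst enn2real_sum) auto

lemma enn2real_discounted_sum_subtree_at:
  assumes \<beta>: "\<beta> > 0" and finite: "discounted_sum \<beta> \<phi> N < \<top>" and u: "u \<in> gw_tree N"
  shows "enn2real (discounted_sum \<beta> \<phi> (subtree_at u N)) = enn2real (\<phi> (subtree_at u N))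
    + \<beta> * (\<Sum>i<N u. enn2real (discounted_sum \<beta> \<phi> (subtree_at (u @ [i]) N)))"
proof -
  have rec: "discounted_sum \<beta> \<phi> (subtree_at u N) = \<phi> (subtree_at u N)
      + ennreal \<beta> * (\<Sum>i<N u. discounted_sum \<beta> \<phi> (subtree_at (u @ [i]) N))"
    using \<beta> by (simp add: discounted_sum_rec[of \<beta> \<phi>] children_sum_subtree_at)
  have "discounted_sum \<beta> \<phi> (subtree_at u N) < \<top>"
    by (rule discounted_sum_subtree_at_finite[OF \<beta> finite u])
  then have "\<phi> (subtree_at u N) < \<top>"
    "ennreal \<beta> * (\<Sum>i<N u. discounted_sum \<beta> \<phi> (subtree_at (u @ [i]) N)) < \<top>"
    unfolding rec by (simp_all add: top.not_eq_extremum)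
  moreover have "discounted_sum \<beta> \<phi> (subtree_at (u @ [i]) N) < \<top>" if "i < N u" for i
    using that u by (intro discounted_sum_subtree_at_finite[OF \<beta> finite]) (simp add: gw_tree_snoc)
  ultimately show ?thesis
    using \<beta> by (subst rec) (simp add: enn2real_plus enn2real_mult enn2real_sum_lessThan)
qed

lemma walk_potential_discounted:
  assumes \<beta>: "\<beta> > 0" and "discounted_size \<beta> N < \<top>" and "second_potential \<beta> N < \<top>"
  shows "walk_potential \<beta> N (\<lambda>u. enn2real (discounted_size \<beta> (subtree_at u N)))
    (\<lambda>u. enn2real (second_potential \<beta> (subtree_at u N)))"
proof
  define y where "y = (\<lambda>u. enn2real (discounted_size \<beta> (subtree_at u N)))"
  define k where "k = (\<lambda>u. enn2real (second_potential \<beta> (subtree_at u N)))"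
  fix u assume u: "u \<in> gw_tree N"
  show y_rec: "y u = 1 + \<beta> * (\<Sum>i<N u. y (u @ [i]))"
    using enn2real_discounted_sum_subtree_at[OF \<beta> _ u, of "\<lambda>_. 1"] assms
    by (simp add: y_def discounted_size_def)
  then show "y u \<ge> 1"
    using \<beta> by (simp add: y_def sum_nonneg)
  show "k u \<ge> 0" by (simp add: k_def)
  have "discounted_size \<beta> (subtree_at (u @ [i]) N) < \<top>" if "i < N u" for i
    using discounted_sum_subtree_at_finite[OF \<beta>, of "\<lambda>_. 1" N "u @ [i]"] assms that u
    by (simp add: discounted_size_def gw_tree_snoc)
  then have "enn2real (second_potential_source \<beta> (subtree_at u N))
      = 4 * (\<beta> * (\<Sum>i<N u. y (u @ [i])))^2 + 4 * \<beta> * (\<Sum>i<N u. (y (u @ [i]))^2)"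
    using \<beta> by (simp add: second_potential_source_def children_sum_subtree_at y_def
        enn2real_plus enn2real_mult enn2real_sum_lessThan power2_eq_square ennreal_mult_less_top)
  then show "k u = 4 * (y u - 1)^2 + 4 * \<beta> * (\<Sum>i<N u. (y (u @ [i]))^2)
      + \<beta> * (\<Sum>i<N u. k (u @ [i]))"
    using enn2real_discounted_sum_subtree_at[OF \<beta> _ u, of "second_potential_source \<beta>"] assms y_rec
    by (simp add: k_def second_potential_def)
qed (use \<beta> in simp)

lemma return_time_second_moment_le_potentials:
  assumes \<beta>: "\<beta> > 0"
  shows "return_time_second_moment \<beta> N \<le> 4 * (discounted_size \<beta> N)^2 + second_potential \<beta> N"
proof (cases "discounted_size \<beta> N < \<top> \<and> second_potential \<beta> N < \<top>")
  case True
  then interpret walk_potential \<beta> N "\<lambda>u. enn2real (discounted_size \<beta> (subtree_at u N))"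
      "\<lambda>u. enn2real (second_potential \<beta> (subtree_at u N))"
    using walk_potential_discounted[OF \<beta>] by blast
  have "ennreal ((enn2real (discounted_size \<beta> N))^2) = (discounted_size \<beta> N)^2"
    using True by (simp add: ennreal_power[symmetric] ennreal_enn2real less_top)
  then show ?thesis
    using return_time_second_moment_le True
    by (simp add: ennreal_enn2real less_top ennreal_plus ennreal_mult)
qed (auto simp: less_top[symmetric] ennreal_mult_eq_top_iff power_eq_top_ennreal)

lemma nn_integral_return_time_second_moment_finite:
  assumes \<beta>: "\<beta> > 0" and m: "nn_mean R = ennreal m" "m \<ge> 0"
    and v: "nn_factorial_moment2 R < \<top>"
    and "\<beta> * m < 1" and "\<beta>^2 * m < 1"
  shows "(\<integral>\<^sup>+N. return_time_second_moment \<beta> N \<partial>gw_measure R) < \<top>"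
proof -
  obtain v' where v': "nn_factorial_moment2 R = ennreal v'" "v' \<ge> 0"
    using v ennreal_enn2real less_top enn2real_nonneg by metis
  have "(\<integral>\<^sup>+N. return_time_second_moment \<beta> N \<partial>gw_measure R)
      \<le> (\<integral>\<^sup>+N. 4 * (discounted_size \<beta> N)^2 + second_potential \<beta> N \<partial>gw_measure R)"
    by (intro nn_integral_mono return_time_second_moment_le_potentials \<beta>)
  also have "\<dots> < \<top>"
    using \<beta> by (intro nn_integral_potentials_finite[OF _ m v']) (use assms in auto)
  finally show ?thesis .
qed

section \<open>The extinction probability\<close>

definition extinct_by :: "nat \<Rightarrow> (nat list \<Rightarrow> nat) set" where
  "extinct_by n = {N. \<forall>u\<in>gw_tree N. length u < n}"

lemma extinct_by_0: "extinct_by 0 = {}"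
  using gw_tree_Nil by (auto simp: extinct_by_def)

lemma extinct_by_Suc: "extinct_by (Suc n) = {N. \<forall>i < N []. child_tree i N \<in> extinct_by n}"
proof -
  have "(\<forall>u\<in>gw_tree N. length u < Suc n) \<longleftrightarrow>
      (\<forall>i < N []. \<forall>v\<in>gw_tree (child_tree i N). length v < n)" for N
  proof (intro iffI allI impI ballI)
    fix i v assume "\<forall>u\<in>gw_tree N. length u < Suc n" "i < N []" "v \<in> gw_tree (child_tree i N)"
    then show "length v < n" using gw_tree_Cons[of i v N] by fastforce
  next
    fix u assume *: "\<forall>i < N []. \<forall>v\<in>gw_tree (child_tree i N). length v < n" and "u \<in> gw_tree N"
    then show "length u < Suc n" by (cases u) (auto simp: gw_tree_Cons)
  qed
  then show ?thesis by (auto simp: extinct_by_def)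
qed

lemma incseq_extinct_by: "incseq extinct_by"
  unfolding incseq_def extinct_by_def by fastforce

lemma sets_forall_child_tree:
  assumes A: "A \<in> sets (gw_measure R)"
  shows "{N. \<forall>i < N []. child_tree i N \<in> A} \<in> sets (gw_measure R)"
proof -
  have eq: "{N. \<forall>i < N []. child_tree i N \<in> A} = (\<Inter>i. {N. N [] \<le> i} \<union> (child_tree i -` A))"
    by (auto; meson not_le)
  have "{N. N [] \<le> i} \<in> sets (gw_measure R)" for i
    using measurable_sets[OF measurable_gw_component_count_space, of "{..i}" "[]" R]
    by (simp add: vimage_def)
  moreover have "child_tree i -` A \<in> sets (gw_measure R)" for i
    using measurable_sets[OF measurable_child_tree A] by simp
  ultimately show ?thesis unfolding eq by (intro sets.countable_INT) auto
qed

lemma sets_extinct_by: "extinct_by n \<in> sets (gw_measure R)"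
  by (induction n) (simp_all add: extinct_by_0 extinct_by_Suc sets_forall_child_tree)

lemma emeasure_forall_child_tree:
  assumes A: "A \<in> sets (gw_measure R)"
  shows "emeasure (gw_measure R) {N. \<forall>i < N []. child_tree i N \<in> A}
    = (\<Sum>k. ennreal (pmf R k) * emeasure (gw_measure R) A ^ k)"
proof -
  have [measurable]: "(\<lambda>N. indicator A (child_tree i N) :: ennreal) \<in> borel_measurable (gw_measure R)"
    for i using A by measurable
  have "indicator {N. \<forall>i < N []. child_tree i N \<in> A} N
      = (\<Sum>k. of_bool (N [] = k) * (\<Prod>i\<in>{..<k}. indicator A (child_tree i N)) :: ennreal)" for N
    by (subst suminf_finite[of "{N []}"]) (auto simp: indicator_def)
  then have "emeasure (gw_measure R) {N. \<forall>i < N []. child_tree i N \<in> A}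
      = (\<Sum>k. \<integral>\<^sup>+N. of_bool (N [] = k) * (\<Prod>i\<in>{..<k}. indicator A (child_tree i N)) \<partial>gw_measure R)"
    using sets_forall_child_tree[OF A]
    by (simp del: nn_integral_indicator add: nn_integral_indicator[symmetric] nn_integral_suminf)
  also have "\<dots> = (\<Sum>k. (\<integral>\<^sup>+x. of_bool (x = k) \<partial>measure_pmf R)
      * (\<Prod>i\<in>{..<k}. \<integral>\<^sup>+N. indicator A N \<partial>gw_measure R))"
    using A by (intro suminf_cong nn_integral_root_child_trees_prod) auto
  also have "(\<lambda>k. \<integral>\<^sup>+x. of_bool (x = k) \<partial>measure_pmf R) = (\<lambda>k. ennreal (pmf R k))"
  proof
    fix k
    have "(\<integral>\<^sup>+x. of_bool (x = k) \<partial>measure_pmf R) = (\<integral>\<^sup>+x. indicator {k} x \<partial>measure_pmf R)"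
      by (intro nn_integral_cong) (auto simp: indicator_def)
    then show "(\<integral>\<^sup>+x. of_bool (x = k) \<partial>measure_pmf R) = ennreal (pmf R k)"
      by (simp add: emeasure_pmf_single)
  qed
  finally show ?thesis using A by simp
qed

lemma suminf_ennreal_pmf_nat: "(\<Sum>k. ennreal (pmf P k)) = 1"
proof -
  have "(\<Sum>k. ennreal (pmf P k)) = (\<integral>\<^sup>+x. ennreal (pmf P x) \<partial>count_space UNIV)"
    by (rule nn_integral_count_space_nat[symmetric])
  also have "\<dots> = 1"
    by (simp add: nn_integral_pmf measure_pmf.emeasure_space_1[simplified])
  finally show ?thesis .
qed

lemma summable_pmf_nat: "summable (pmf P :: nat \<Rightarrow> real)"
  by (rule summable_suminf_not_top) (auto simp: suminf_ennreal_pmf_nat)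

lemma suminf_pmf_nat: "(\<Sum>k. pmf P k) = (1 :: real)"
  using suminf_ennreal_pmf_nat[of P]
  by (subst (asm) suminf_ennreal2) (auto intro: summable_pmf_nat)

lemma summable_pgf: "\<bar>s\<bar> \<le> 1 \<Longrightarrow> summable (\<lambda>k. pmf P k * s^k)"
  by (rule summable_comparison_test[OF _ summable_pmf_nat[of P]])
     (auto simp: abs_mult power_abs intro!: mult_left_le power_le_one)

lemma pgf_1: "pgf P 1 = 1"
  by (simp add: pgf_def suminf_pmf_nat)

lemma suminf_ennreal_pgf:
  "0 \<le> s \<Longrightarrow> s \<le> 1 \<Longrightarrow> (\<Sum>k. ennreal (pmf P k) * ennreal s ^ k) = ennreal (pgf P s)"
  unfolding pgf_def
  by (subst suminf_ennreal2[symmetric])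
     (auto intro!: suminf_cong summable_pgf simp: ennreal_power ennreal_mult)

lemma finite_gw_tree_imp_extinct_by: "finite (gw_tree N) \<Longrightarrow> \<exists>n. N \<in> extinct_by n"
  by (auto simp: extinct_by_def intro!: exI[of _ "Suc (Max (length ` gw_tree N))"] le_imp_less_Suc)

lemma extinction_prob_le:
  assumes "0 \<le> s" "s \<le> 1" "pgf P s \<le> s"
  shows "extinction_prob P \<le> s"
proof -
  have extinct_by_le: "emeasure (gw_measure P) (extinct_by n) \<le> ennreal s" for n
  proof (induction n)
    case (Suc n)
    have "emeasure (gw_measure P) (extinct_by (Suc n))
        = (\<Sum>k. ennreal (pmf P k) * emeasure (gw_measure P) (extinct_by n) ^ k)"
      unfolding extinct_by_Suc by (rule emeasure_forall_child_tree[OF sets_extinct_by])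
    also have "\<dots> \<le> (\<Sum>k. ennreal (pmf P k) * ennreal s ^ k)"
      using Suc.IH by (intro suminf_le summableI mult_left_mono power_mono) auto
    also have "\<dots> \<le> ennreal s"
      using assms by (simp add: suminf_ennreal_pgf)
    finally show ?case .
  qed (simp add: extinct_by_0)
  have "emeasure (gw_measure P) {N. finite (gw_tree N)} \<le> emeasure (gw_measure P) (\<Union>n. extinct_by n)"
    using finite_gw_tree_imp_extinct_by
    by (intro emeasure_mono) (auto intro: sets.countable_UN sets_extinct_by)
  also have "\<dots> = (SUP n. emeasure (gw_measure P) (extinct_by n))"
    by (rule SUP_emeasure_incseq[symmetric]) (auto intro: sets_extinct_by incseq_extinct_by)
  also have "\<dots> \<le> ennreal s" by (intro SUP_least extinct_by_le)
  finally show ?thesis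
    unfolding extinction_prob_def measure_def using assms by (simp add: enn2real_leI)
qed

text \<open>For \<open>s\<^sup>K = 1/H\<close>, where \<open>H > 1\<close> is a partial sum of the mean, \<open>1 - f(s) \<ge> (1 - s) s\<^sup>K H = 1 - s\<close>.\<close>

lemma supercritical_pgf_le_somewhere:
  assumes "summable (\<lambda>k. real k * pmf P k)" and "offspring_mean P > 1"
  obtains s where "0 \<le> s" "s < 1" "pgf P s \<le> s"
proof -
  have "(\<lambda>n. \<Sum>k<n. real k * pmf P k) \<longlonglongrightarrow> offspring_mean P"
    unfolding offspring_mean_def by (rule summable_LIMSEQ[OF assms(1)])
  then have "eventually (\<lambda>n. (\<Sum>k<n. real k * pmf P k) > 1) sequentially"
    using assms(2) by (rule order_tendstoD(1))
  then obtain K where "(\<Sum>k<K. real k * pmf P k) > 1"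
    by (auto simp: eventually_sequentially)
  moreover define H where "H = (\<Sum>k<K. real k * pmf P k)"
  ultimately have H: "H > 1" and K: "K > 0" by (auto intro: Nat.gr0I)
  define s where "s = root K (1 / H)"
  have s: "0 < s" "s < 1" "s ^ K = 1 / H"
    using H K by (simp_all add: s_def real_root_pow_pos)
  have "1 - pgf P s = (\<Sum>k. pmf P k - pmf P k * s^k)"
    unfolding pgf_def suminf_pmf_nat[of P, symmetric] using s
    by (intro suminf_diff summable_pmf_nat summable_pgf) auto
  also have "\<dots> \<ge> (\<Sum>k<K. pmf P k - pmf P k * s^k)"
    using s by (intro sum_le_suminf summable_diff summable_pmf_nat summable_pgf)
       (auto simp: algebra_simps intro!: mult_left_le_one_le power_le_one)
  also have "(\<Sum>k<K. pmf P k - pmf P k * s^k) = (\<Sum>k<K. pmf P k * ((1 - s) * (\<Sum>j<k. s^j)))"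
    by (intro sum.cong refl, subst one_diff_power_eq[symmetric]) (simp add: right_diff_distrib)
  also have "\<dots> \<ge> (\<Sum>k<K. pmf P k * ((1 - s) * (real k * s^K)))"
  proof (intro sum_mono mult_left_mono)
    fix k assume "k \<in> {..<K}"
    then have "(\<Sum>j<k. s^K) \<le> (\<Sum>j<k. s^j)"
      using s by (intro sum_mono power_decreasing) auto
    then show "real k * s^K \<le> (\<Sum>j<k. s^j)" by simp
  qed (use s in auto)
  also have "(\<Sum>k<K. pmf P k * ((1 - s) * (real k * s^K))) = (1 - s) * s^K * H"
    by (simp add: H_def sum_distrib_left algebra_simps)
  also have "\<dots> = 1 - s"
    using s H by simp
  finally show ?thesis using s by (intro that) auto
qed

lemma extinction_prob_less_1:
  assumes "summable (\<lambda>k. real k * pmf P k)" and "offspring_mean P > 1"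
  shows "extinction_prob P < 1"
proof -
  obtain s where "0 \<le> s" "s < 1" "pgf P s \<le> s"
    using supercritical_pgf_le_somewhere[OF assms] .
  then show ?thesis using extinction_prob_le[of s P] by simp
qed

section \<open>Power series determined on the unit interval\<close>

lemma summable_powser_of_summable_abs:
  fixes c :: "nat \<Rightarrow> real"
  assumes "summable (\<lambda>k. \<bar>c k\<bar>)" "\<bar>s\<bar> \<le> 1"
  shows "summable (\<lambda>k. c k * s^k)"
  by (rule summable_comparison_test[OF _ assms(1)])
     (use assms(2) in \<open>auto simp: abs_mult power_abs intro!: mult_left_le power_le_one\<close>)

lemma powser_zero_on_unit_interval_imp_zero:
  fixes c :: "nat \<Rightarrow> real"
  assumes c: "summable (\<lambda>k. \<bar>c k\<bar>)"
    and zero: "\<And>s. 0 < s \<Longrightarrow> s \<le> 1 \<Longrightarrow> (\<Sum>k. c k * s^k) = 0"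
  shows "c n = 0"
proof (induction n rule: less_induct)
  case (less n)
  define g where "g = (\<lambda>s. \<Sum>m. c (m + n) * s^m)"
  have c_shift: "summable (\<lambda>m. \<bar>c (m + n)\<bar>)"
    using summable_ignore_initial_segment[OF c, of n] by simp
  have g_zero: "g s = 0" if s: "0 < s" "s \<le> 1" for s
  proof -
    have "summable (\<lambda>k. c k * s^k)"
      using s by (intro summable_powser_of_summable_abs[OF c]) auto
    then have "(\<Sum>k. c k * s^k) = (\<Sum>m. c (m + n) * s^(m + n)) + (\<Sum>i<n. c i * s^i)"
      by (rule suminf_split_initial_segment)
    then have "0 = (\<Sum>m. c (m + n) * s^(m + n)) + (\<Sum>i<n. c i * s^i)"
      using zero[OF s] by simp
    also have "\<dots> = s^n * g s"
      using s less.IH summable_powser_of_summable_abs[OF c_shift, of s] unfolding g_def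
      by (subst suminf_mult[symmetric]) (auto simp: power_add mult_ac)
    finally show ?thesis using s by simp
  qed
  have "isCont g 0"
    unfolding g_def using summable_rabs_cancel[OF c_shift]
    by (intro isCont_powser[of _ 1]) simp_all
  then have "(\<lambda>j. g (inverse (real (Suc j)))) \<longlonglongrightarrow> g 0"
    by (rule isCont_tendsto_compose[OF _ LIMSEQ_inverse_real_of_nat])
  moreover have "(\<lambda>j. g (inverse (real (Suc j)))) = (\<lambda>j. 0)"
    by (intro ext g_zero) (auto simp: field_simps)
  ultimately have "g 0 = 0" using LIMSEQ_unique tendsto_const by metis
  then show ?case by (simp add: g_def)
qed

lemma powser_eq_on_unit_interval_imp_eq:
  fixes a b :: "nat \<Rightarrow> real"
  assumes a: "summable (\<lambda>k. \<bar>a k\<bar>)" and b: "summable (\<lambda>k. \<bar>b k\<bar>)"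
    and eq: "\<And>s. 0 \<le> s \<Longrightarrow> s \<le> 1 \<Longrightarrow> (\<Sum>k. a k * s^k) = (\<Sum>k. b k * s^k)"
  shows "a n = b n"
proof -
  have "summable (\<lambda>k. \<bar>a k - b k\<bar>)"
    by (rule summable_comparison_test[OF _ summable_add[OF a b]]) (auto intro: abs_triangle_ineq4)
  moreover have "(\<Sum>k. (a k - b k) * s^k) = 0" if "0 < s" "s \<le> 1" for s
  proof -
    have "(\<Sum>k. a k * s^k - b k * s^k) = (\<Sum>k. a k * s^k) - (\<Sum>k. b k * s^k)"
      using that by (intro suminf_diff[symmetric] summable_powser_of_summable_abs a b) auto
    then show ?thesis using that eq[of s] by (simp add: left_diff_distrib)
  qed
  ultimately have "a n - b n = 0"
    by (rule powser_zero_on_unit_interval_imp_zero)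
  then show ?thesis by simp
qed

section \<open>The offspring law conditioned on extinction\<close>

lemma nn_integral_of_nat_pmf_sums:
  fixes g :: "nat \<Rightarrow> nat"
  assumes "(\<lambda>k. real (g k) * pmf R k) sums D"
  shows "(\<integral>\<^sup>+k. of_nat (g k) \<partial>measure_pmf R) = ennreal D"
proof -
  have "(\<integral>\<^sup>+k. of_nat (g k) \<partial>measure_pmf R) = (\<Sum>k. ennreal (real (g k) * pmf R k))"
    unfolding nn_integral_measure_pmf nn_integral_count_space_nat
    by (intro suminf_cong) (simp add: ennreal_mult ennreal_of_nat_eq_real_of_nat mult.commute)
  also have "\<dots> = ennreal D"
    using assms by (intro suminf_ennreal_eq) auto
  finally show ?thesis .
qed

lemma pmf_conditioned_offspring:
  assumes q: "0 < q" "q \<le> 1" and R_gf: "\<forall>s\<in>{0..1}. pgf R s = pgf P (q * s) / q"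
  shows "pmf R k = pmf P k * q^k / q"
proof (rule powser_eq_on_unit_interval_imp_eq)
  show "summable (\<lambda>k. \<bar>pmf R k\<bar>)" using summable_pmf_nat by simp
  have "\<bar>pmf P k * q^k / q\<bar> \<le> pmf P k / q" for k
    using q by (simp add: abs_mult divide_right_mono mult_left_le power_le_one)
  then show "summable (\<lambda>k. \<bar>pmf P k * q^k / q\<bar>)"
    by (intro summable_comparison_test[OF _ summable_divide[OF summable_pmf_nat]]) auto
  fix s :: real assume s: "0 \<le> s" "s \<le> 1"
  have "(\<Sum>k. pmf R k * s^k) = pgf P (q * s) / q"
    using R_gf s by (simp add: pgf_def)
  also have "\<dots> = (\<Sum>k. pmf P k * (q * s)^k / q)"
    unfolding pgf_def using s q
    by (intro suminf_divide[symmetric] summable_pgf) (auto simp: abs_mult intro: mult_le_one)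
  finally show "(\<Sum>k. pmf R k * s^k) = (\<Sum>k. pmf P k * q^k / q * s^k)"
    by (simp add: power_mult_distrib mult_ac)
qed

lemma pgf_deriv_sums:
  assumes "0 \<le> x" "x < 1"
  shows "(\<lambda>k. real k * pmf P k * x^k) sums (x * deriv (pgf P) x)"
proof -
  define D where "D = (\<Sum>n. diffs (pmf P) n * x^n)"
  have "(pgf P has_field_derivative D) (at x)"
    unfolding D_def pgf_def[abs_def]
    by (rule termdiffs_strong[of _ 1]) (use assms summable_pmf_nat in auto)
  then have "deriv (pgf P) x = D"
    by (rule DERIV_imp_deriv)
  moreover have "summable (\<lambda>n. diffs (pmf P) n * x^n)"
    by (rule termdiff_converges[of x 1]) (use assms in \<open>auto intro!: summable_pgf\<close>)
  then have "(\<lambda>n. real (Suc n) * pmf P (Suc n) * x^Suc n) sums (x * D)"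
    unfolding D_def by (auto dest: summable_sums sums_mult simp: diffs_def mult_ac)
  ultimately show ?thesis
    using sums_Suc_iff[of "\<lambda>k. real k * pmf P k * x^k" "x * D"] by simp
qed

lemma power_mult_one_minus_le:
  fixes q :: real assumes "0 \<le> q" "q \<le> 1"
  shows "real k * q^k * (1 - q) \<le> q * (1 - q^k)"
proof -
  have "real k * q^k * (1 - q) = (1 - q) * (\<Sum>j<k. q^k)"
    by simp
  also have "\<dots> \<le> (1 - q) * (\<Sum>j<k. q^Suc j)"
    using assms by (intro mult_left_mono sum_mono power_decreasing) auto
  also have "\<dots> = q * (1 - q^k)"
    by (simp add: one_diff_power_eq sum_distrib_left mult_ac)
  finally show ?thesis .
qed

text \<open>Convexity of the generating function: its slope at a fixed point \<open>q < 1\<close> is at most that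
  of the chord from \<open>q\<close> to the fixed point \<open>1\<close>.\<close>

lemma deriv_pgf_le_1_at_fixed_point:
  assumes q: "0 < q" "q < 1" and fixed: "pgf P q = q"
  shows "deriv (pgf P) q \<le> 1"
proof -
  have "real k * pmf P k * q^k * (1 - q) \<le> q * (pmf P k - pmf P k * q^k)" for k
  proof -
    have "pmf P k * (real k * q^k * (1 - q)) \<le> pmf P k * (q * (1 - q^k))"
      using q by (intro mult_left_mono power_mult_one_minus_le) auto
    then show ?thesis by (simp add: right_diff_distrib mult_ac)
  qed
  moreover have "(\<lambda>k. real k * pmf P k * q^k * (1 - q)) sums (q * deriv (pgf P) q * (1 - q))"
    using pgf_deriv_sums[of q P] q by (intro sums_mult2) auto
  moreover have "(\<lambda>k. q * (pmf P k - pmf P k * q^k)) sums (q * (1 - q))"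
  proof (intro sums_mult sums_diff)
    show "pmf P sums 1"
      using summable_sums[OF summable_pmf_nat[of P]] by (simp add: suminf_pmf_nat)
    show "(\<lambda>k. pmf P k * q^k) sums q"
      using summable_sums[OF summable_pgf[of q P]] q fixed by (simp add: pgf_def)
  qed
  ultimately have "q * deriv (pgf P) q * (1 - q) \<le> q * (1 - q)"
    by (rule sums_le)
  then show ?thesis using q by simp
qed

lemma summable_factorial2_geometric:
  fixes q :: real assumes "0 \<le> q" "q < 1"
  shows "summable (\<lambda>k. real (k * (k - 1)) * q^k)"
proof -
  have "summable (\<lambda>n. diffs (diffs (\<lambda>_. 1)) n * q^n)"
    by (intro termdiff_converges[of q 1] summable_geometric)
       (use assms in \<open>auto intro!: termdiff_converges summable_geometric\<close>)
  moreover have "norm (real (k * (k - 1)) * q^k) \<le> diffs (diffs (\<lambda>_. 1)) k * q^k" for k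
  proof -
    have "k * (k - 1) \<le> Suc k * Suc (Suc k)" by (intro mult_mono) auto
    then have "real (k * (k - 1)) \<le> real (Suc k) * real (Suc (Suc k))"
      by (simp only: of_nat_mult[symmetric] of_nat_le_iff)
    then show ?thesis using assms
      by (auto simp: diffs_def abs_mult intro!: mult_right_mono)
  qed
  ultimately show ?thesis
    by (rule summable_comparison_test')
qed

lemma conditioned_offspring_moments:
  assumes q: "0 < q" "q < 1" and fixed: "pgf P q = q"
    and R_gf: "\<forall>s\<in>{0..1}. pgf R s = pgf P (q * s) / q"
  shows "nn_mean R = ennreal (deriv (pgf P) q)" "0 \<le> deriv (pgf P) q" "deriv (pgf P) q \<le> 1"
    and "nn_factorial_moment2 R < \<top>"
proof -
  have pmf_R: "pmf R k = pmf P k * q^k / q" for k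
    using pmf_conditioned_offspring[OF _ _ R_gf] q by simp
  have mean: "(\<lambda>k. real k * pmf R k) sums deriv (pgf P) q"
    using sums_divide[OF pgf_deriv_sums[of q P], of q] q by (simp add: pmf_R mult.assoc)
  then show "nn_mean R = ennreal (deriv (pgf P) q)"
    unfolding nn_mean_def by (rule nn_integral_of_nat_pmf_sums[where g="\<lambda>k. k"])
  show "0 \<le> deriv (pgf P) q"
    by (rule sums_le[OF _ sums_zero mean]) simp
  show "deriv (pgf P) q \<le> 1"
    by (rule deriv_pgf_le_1_at_fixed_point[OF q fixed])
  have "real (k * (k - 1)) * pmf R k \<le> real (k * (k - 1)) * q^k / q" for k
  proof -
    have "pmf P k * q^k \<le> q^k"
      using q by (intro mult_left_le_one_le) (auto simp: pmf_le_1)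
    then have "real (k * (k - 1)) * (pmf P k * q^k) / q \<le> real (k * (k - 1)) * q^k / q"
      using q by (intro divide_right_mono mult_left_mono) auto
    then show ?thesis by (simp add: pmf_R mult.assoc)
  qed
  then have "summable (\<lambda>k. real (k * (k - 1)) * pmf R k)"
    by (intro summable_comparison_test'[OF summable_divide[OF summable_factorial2_geometric]])
       (use q in auto)
  then show "nn_factorial_moment2 R < \<top>"
    unfolding nn_factorial_moment2_def
    by (subst nn_integral_of_nat_pmf_sums[OF summable_sums]) auto
qed

lemma square_mult_less_one_of_less_inverse_sqrt:
  fixes \<beta> m :: real
  assumes "0 < \<beta>" "0 \<le> m" "\<beta> < 1 / sqrt m"
  shows "\<beta>^2 * m < 1"
proof (cases "m = 0")
  case False
  then have "\<beta> * sqrt m < 1" using assms by (simp add: field_simps)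
  then have "(\<beta> * sqrt m)^2 < 1" using assms by (simp add: power_less_one_iff abs_less_iff)
  then show ?thesis using assms by (simp add: power_mult_distrib)
qed simp

lemma mult_less_one_of_square_mult_less_one:
  fixes \<beta> m :: real
  assumes "0 < \<beta>" "0 \<le> m" "m \<le> 1" "\<beta>^2 * m < 1"
  shows "\<beta> * m < 1"
proof (cases "\<beta> < 1")
  case True
  then show ?thesis using assms mult_left_mono[of m 1 \<beta>] by linarith
next
  case False
  then have "\<beta> * m \<le> \<beta>^2 * m" using assms by (intro mult_right_mono) (auto simp: power2_eq_square)
  then show ?thesis using assms by linarith
qed

theorem lemma2p1:
  fixes P R :: "nat pmf" and \<beta> :: real
  assumes p0: "pmf P 0 > 0"
    and mean_finite: "summable (\<lambda>k. real k * pmf P k)"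
    and supercrit: "offspring_mean P > 1"
    and beta_lower: "1 / offspring_mean P < \<beta>"
    and beta_upper: "\<beta> < 1 / sqrt (deriv (pgf P) (extinction_prob P))"
    and R_gf: "\<forall>s\<in>{0..1}. pgf R s = pgf P (extinction_prob P * s) / extinction_prob P"
  shows "(\<integral>\<^sup>+ N. return_time_second_moment \<beta> N \<partial>gw_measure R) < \<top>"
proof -
  define q where "q = extinction_prob P"
  define D where "D = deriv (pgf P) q"
  have "q \<ge> 0" by (simp add: q_def extinction_prob_def)
  moreover have "q < 1" unfolding q_def by (rule extinction_prob_less_1[OF mean_finite supercrit])
  txt \<open>At \<open>s = 1\<close> the hypothesis on \<open>R\<close> reads \<open>1 = f(q) / q\<close>.\<close>
  moreover have "pgf P q / q = 1"
    using R_gf pgf_1[of R] by (simp add: q_def)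
  ultimately have q: "0 < q" "q < 1" "pgf P q = q"
    by (auto simp: divide_eq_1_iff)
  have "1 / offspring_mean P > 0" using supercrit by simp
  then have \<beta>: "\<beta> > 0" using beta_lower by linarith
  note moments = conditioned_offspring_moments[OF q R_gf[folded q_def], folded D_def]
  have square: "\<beta>^2 * D < 1"
    using square_mult_less_one_of_less_inverse_sqrt[OF \<beta> moments(2)] beta_upper
    by (simp add: q_def D_def)
  have "\<beta> * D < 1"
    by (rule mult_less_one_of_square_mult_less_one[OF \<beta> moments(2,3) square])
  then show ?thesis
    by (intro nn_integral_return_time_second_moment_finite[OF \<beta> moments(1,2,4) _ square])
qed

end
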